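(* Let $H$ be a complex Hilbert space, $A\in B(H)$ a nonzero positive semidefinite operator, and $T\in B_{A^{1/2}}(H)$ with $TA^{1/2}=A^{1/2}T$. If $\lambda\in\mathbb C$ satisfies $|\lambda|>\|T\|_A$, then $\lambda\in\rho_A(T)$.
   Context: $\|x\|_A=\langle Ax,x\rangle^{1/2}$. For $S\in B(H)$, $\|S\|_A=\sup\{\|Sx\|_A : x\in\overline{R(A)},\ \|x\|_A=1\}$. $B_{A^{1/2}}(H)=\{S\in B(H): R(S^*A^{1/2})\subset R(A^{1/2})\}$. $S\in B_{A^{1/2}}(H)$ is $A$-invertible in $B_{A^{1/2}}(H)$ if there is a nonzero $R\in B_{A^{1/2}}(H)$ with $ASR=ARS=A$; $\rho_A(S)=\{\lambda\in\mathbb C:\lambda I-S$ is $A$-invertible in $B_{A^{1/2}}(H)\}$. No closedness of $R(A)$ is assumed. *)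

theory Defs
  imports "HOL-Analysis.Analysis"
begin

class complex_vector = real_vector +
  fixes scaleC :: "complex \<Rightarrow> 'a \<Rightarrow> 'a"
  assumes scaleC_add_right: "scaleC c (x + y) = scaleC c x + scaleC c y"
    and scaleC_add_left: "scaleC (c + d) x = scaleC c x + scaleC d x"
    and scaleC_scaleC: "scaleC c (scaleC d x) = scaleC (c * d) x"
    and scaleC_one: "scaleC 1 x = x"
    and scaleR_scaleC: "scaleR r x = scaleC (complex_of_real r) x"

text \<open>Inner product, linear in the first and conjugate-linear in the second argument.\<close>
class complex_inner = complex_vector + real_normed_vector +
  fixes cinner :: "'a \<Rightarrow> 'a \<Rightarrow> complex"
  assumes cinner_commute: "cinner x y = cnj (cinner y x)"
    and cinner_add_left: "cinner (x + y) z = cinner x z + cinner y z"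
    and cinner_scaleC_left: "cinner (scaleC c x) y = c * cinner x y"
    and cinner_ge_zero: "0 \<le> Re (cinner x x)"
    and cinner_eq_zero_iff: "cinner x x = 0 \<longleftrightarrow> x = 0"
    and norm_eq_sqrt_cinner: "norm x = sqrt (Re (cinner x x))"

class chilbert_space = complex_inner + complete_space

definition clinear_op :: "('a::complex_vector \<Rightarrow> 'a) \<Rightarrow> bool" where
  "clinear_op S \<longleftrightarrow> (\<forall>x y. S (x + y) = S x + S y) \<and> (\<forall>c x. S (scaleC c x) = scaleC c (S x))"

definition bounded_op :: "('a::complex_inner \<Rightarrow> 'a) \<Rightarrow> bool" where
  "bounded_op S \<longleftrightarrow> clinear_op S \<and> (\<exists>K. \<forall>x. norm (S x) \<le> K * norm x)"

text \<open>Hilbert adjoint (unique for bounded operators, by the Riesz representation theorem).\<close>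
definition adjoint_op :: "('a::complex_inner \<Rightarrow> 'a) \<Rightarrow> ('a \<Rightarrow> 'a)" where
  "adjoint_op S = (THE S'. \<forall>x y. cinner (S x) y = cinner x (S' y))"

definition positive_op :: "('a::complex_inner \<Rightarrow> 'a) \<Rightarrow> bool" where
  "positive_op A \<longleftrightarrow> bounded_op A \<and>
     (\<forall>x. Im (cinner (A x) x) = 0 \<and> 0 \<le> Re (cinner (A x) x))"

definition op_sqrt :: "('a::complex_inner \<Rightarrow> 'a) \<Rightarrow> ('a \<Rightarrow> 'a)" where
  "op_sqrt A = (THE B. positive_op B \<and> B \<circ> B = A)"

definition normA :: "('a::complex_inner \<Rightarrow> 'a) \<Rightarrow> 'a \<Rightarrow> real" where
  "normA A x = sqrt (Re (cinner (A x) x))"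

definition opnormA :: "('a::complex_inner \<Rightarrow> 'a) \<Rightarrow> ('a \<Rightarrow> 'a) \<Rightarrow> real" where
  "opnormA A S = Sup {normA A (S x) | x. x \<in> closure (range A) \<and> normA A x = 1}"

definition B_sqrtA :: "('a::complex_inner \<Rightarrow> 'a) \<Rightarrow> ('a \<Rightarrow> 'a) set" where
  "B_sqrtA A = {S. bounded_op S \<and> range (adjoint_op S \<circ> op_sqrt A) \<subseteq> range (op_sqrt A)}"

definition A_invertible :: "('a::complex_inner \<Rightarrow> 'a) \<Rightarrow> ('a \<Rightarrow> 'a) \<Rightarrow> bool" where
  "A_invertible A S \<longleftrightarrow> S \<in> B_sqrtA A \<and>
     (\<exists>R\<in>B_sqrtA A. R \<noteq> (\<lambda>_. 0) \<and> A \<circ> S \<circ> R = A \<and> A \<circ> R \<circ> S = A)"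

definition resolventA :: "('a::complex_inner \<Rightarrow> 'a) \<Rightarrow> ('a \<Rightarrow> 'a) \<Rightarrow> complex set" where
  "resolventA A S = {l. A_invertible A (\<lambda>x. scaleC l x - S x)}"

end

theory Submission
  imports Defs
begin

text \<open>Write \<open>B = A\<^sup>1\<^sup>/\<^sup>2\<close>. Then \<open>\<parallel>x\<parallel>\<^sub>A = \<parallel>B x\<parallel>\<close>, and as \<open>T\<close> commutes with \<open>B\<close>,
  \<open>\<parallel>B T z\<parallel> \<le> \<parallel>T\<parallel>\<^sub>A \<parallel>B z\<parallel>\<close> for every \<open>z\<close>; by density \<open>T\<close> is bounded by \<open>\<parallel>T\<parallel>\<^sub>A\<close> on the closure of the
  range of \<open>B\<close>, which contains \<open>closure (R(A))\<close>. If \<open>P\<close> is the orthogonal projection onto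
  \<open>closure (R(A)) = (ker A)\<^sup>\<bottom>\<close>, then \<open>T P\<close> has norm at most \<open>\<parallel>T\<parallel>\<^sub>A < |\<lambda>|\<close>, so \<open>\<lambda> - T P\<close> is
  invertible by a Neumann series, and \<open>R = P (\<lambda> - T P)\<^sup>-\<^sup>1\<close> satisfies \<open>(\<lambda> - T) R = P = R (\<lambda> - T)\<close>.
  As \<open>A P = A\<close>, this makes \<open>R\<close> an A-inverse of \<open>\<lambda> - T\<close>; both operators commute with \<open>B\<close>, which
  puts them in \<open>B_sqrtA A\<close>.

  Since \<open>A\<^sup>1\<^sup>/\<^sup>2\<close> and adjoints are given by definite descriptions, their existence has to be
  established: the positive square root is built from the power series of \<open>1 - sqrt (1 - t)\<close> and
  shown to be unique, and adjoints come from the Riesz representation theorem.\<close>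

instance chilbert_space \<subseteq> banach ..

lemma cinner_add_right: "cinner x (y + z) = cinner x y + cinner x z"
  by (metis cinner_add_left cinner_commute complex_cnj_add)

lemma cinner_scaleC_right: "cinner x (scaleC c y) = cnj c * cinner x y"
  by (metis cinner_commute cinner_scaleC_left complex_cnj_cnj complex_cnj_mult)

lemma cinner_zero_left [simp]: "cinner 0 x = 0"
  by (metis add.right_neutral add_left_cancel cinner_add_left)

lemma cinner_zero_right [simp]: "cinner x 0 = 0"
  by (metis cinner_commute cinner_zero_left complex_cnj_zero)

lemma cinner_diff_left: "cinner (x - y) z = cinner x z - cinner y z"
  by (metis add_diff_cancel cinner_add_left diff_add_cancel eq_diff_eq)

lemma cinner_diff_right: "cinner x (y - z) = cinner x y - cinner x z"
  by (metis cinner_commute cinner_diff_left complex_cnj_diff)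

lemma scaleC_zero_right [simp]: "scaleC c 0 = 0"
  by (metis add.right_neutral add_left_cancel scaleC_add_right)

lemma scaleC_zero_left [simp]: "scaleC 0 x = 0"
  by (metis of_real_0 scaleR_scaleC scaleR_zero_left)

lemma scaleC_diff_right: "scaleC c (x - y) = scaleC c x - scaleC c y"
  by (metis add_diff_cancel diff_add_cancel eq_diff_eq scaleC_add_right)

lemma scaleC_sum_right: "scaleC c (sum g A) = (\<Sum>a\<in>A. scaleC c (g a))"
  using sum_comp_morphism[of "scaleC c" g A] by (simp add: scaleC_add_right comp_def)

lemma scaleR_scaleC_commute: "scaleR r (scaleC c x) = scaleC c (scaleR r x)"
  by (simp add: scaleR_scaleC scaleC_scaleC mult.commute)

lemma cinner_self_eq_norm_sq: "cinner x x = complex_of_real ((norm x)\<^sup>2)"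
proof -
  have "Im (cinner x x) = 0"
    by (metis cinner_commute cnj.sel(2) neg_equal_zero)
  then show ?thesis
    by (simp add: norm_eq_sqrt_cinner cinner_ge_zero complex_eqI)
qed

lemma norm_sq_eq_cinner: "(norm x)\<^sup>2 = Re (cinner x x)"
  by (simp add: cinner_self_eq_norm_sq)

lemma norm_scaleC: "norm (scaleC c (x::'a::complex_inner)) = cmod c * norm x"
proof -
  have "cinner (scaleC c x) (scaleC c x) = (c * cnj c) * cinner x x"
    by (simp add: cinner_scaleC_left cinner_scaleC_right)
  also have "\<dots> = complex_of_real ((cmod c * norm x)\<^sup>2)"
    by (simp add: complex_norm_square[symmetric] cinner_self_eq_norm_sq power_mult_distrib)
  finally have "(norm (scaleC c x))\<^sup>2 = (cmod c * norm x)\<^sup>2"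
    by (metis norm_sq_eq_cinner Re_complex_of_real)
  then show ?thesis
    by (simp add: power2_eq_iff_nonneg)
qed

lemma bounded_linear_scaleC: "bounded_linear (scaleC c :: 'a::complex_inner \<Rightarrow> 'a)"
  by (rule bounded_linear_intro[where K = "cmod c"])
    (simp_all add: scaleC_add_right scaleR_scaleC scaleC_scaleC mult.commute norm_scaleC)

lemma cinner_eq_right_imp_eq: "(\<And>z. cinner z x = cinner z y) \<Longrightarrow> x = y"
  by (metis cinner_diff_right cinner_eq_zero_iff diff_self eq_iff_diff_eq_0)

lemma clinear_opI:
  "(\<And>x y. S (x + y) = S x + S y) \<Longrightarrow> (\<And>c x. S (scaleC c x) = scaleC c (S x)) \<Longrightarrow> clinear_op S"
  by (simp add: clinear_op_def)

lemma clinear_op_add: "clinear_op S \<Longrightarrow> S (x + y) = S x + S y"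
  by (simp add: clinear_op_def)

lemma clinear_op_scaleC: "clinear_op S \<Longrightarrow> S (scaleC c x) = scaleC c (S x)"
  by (simp add: clinear_op_def)

lemma clinear_op_zero: "clinear_op S \<Longrightarrow> S 0 = 0"
  by (metis clinear_op_scaleC scaleC_zero_left)

lemma clinear_op_diff: "clinear_op S \<Longrightarrow> S (x - y) = S x - S y"
  by (metis add_diff_cancel clinear_op_add diff_add_cancel eq_diff_eq)

lemma clinear_op_scaleR: "clinear_op S \<Longrightarrow> S (scaleR r x) = scaleR r (S x)"
  by (simp add: clinear_op_scaleC scaleR_scaleC)

lemma clinear_op_sum: "clinear_op S \<Longrightarrow> S (sum g A) = (\<Sum>a\<in>A. S (g a))"
  using sum_comp_morphism[of S g A] by (simp add: clinear_op_zero clinear_op_add comp_def)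

lemma clinear_op_funpow: "clinear_op S \<Longrightarrow> clinear_op (S ^^ n)"
  by (induction n) (simp_all add: clinear_op_def)

lemma bounded_opI: "clinear_op S \<Longrightarrow> (\<And>x. norm (S x) \<le> K * norm x) \<Longrightarrow> bounded_op S"
  unfolding bounded_op_def by blast

lemma bounded_op_clinear: "bounded_op S \<Longrightarrow> clinear_op S"
  by (simp add: bounded_op_def)

lemma bounded_op_bound: "bounded_op S \<Longrightarrow> \<exists>K. \<forall>x. norm (S x) \<le> K * norm x"
  by (simp add: bounded_op_def)

lemma bounded_op_bounded_linear: "bounded_op S \<Longrightarrow> bounded_linear S"
proof -
  assume S: "bounded_op S"
  then obtain K where "\<forall>x. norm (S x) \<le> K * norm x"
    by (auto simp: bounded_op_def)
  with S show ?thesis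
    by (intro bounded_linear_intro[where K = K])
      (auto simp: bounded_op_def clinear_op_add clinear_op_scaleR mult.commute)
qed

lemma bounded_op_bound_pos: "bounded_op S \<Longrightarrow> \<exists>K>0. \<forall>x. norm (S x) \<le> K * norm x"
  using bounded_linear.pos_bounded[OF bounded_op_bounded_linear] by (metis mult.commute)

lemma bounded_op_scaleC_minus:
  assumes "bounded_op T"
  shows "bounded_op (\<lambda>x. scaleC l x - T x)"
proof -
  have T: "clinear_op T"
    using assms by (rule bounded_op_clinear)
  obtain K where K: "\<And>x. norm (T x) \<le> K * norm x"
    using bounded_op_bound[OF assms] by blast
  show ?thesis
  proof (rule bounded_opI)
    show "clinear_op (\<lambda>x. scaleC l x - T x)"
      by (rule clinear_opI) (simp_all add: clinear_op_add[OF T] clinear_op_scaleC[OF T]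
          scaleC_add_right scaleC_diff_right scaleC_scaleC mult.commute)
    fix x
    have "norm (scaleC l x - T x) \<le> cmod l * norm x + K * norm x"
      using norm_triangle_ineq4[of "scaleC l x" "T x"] K[of x] by (simp add: norm_scaleC)
    then show "norm (scaleC l x - T x) \<le> (cmod l + K) * norm x"
      by (simp add: distrib_right)
  qed
qed

lemma bounded_op_compose:
  assumes "bounded_op S" and "bounded_op Q"
  shows "bounded_op (\<lambda>x. S (Q x))"
proof -
  have "bounded_linear (\<lambda>x. S (Q x))"
    using assms by (intro bounded_linear_compose[of S Q] bounded_op_bounded_linear)
  then obtain K where "\<And>x. norm (S (Q x)) \<le> norm x * K"
    using bounded_linear.bounded by blast
  moreover have "clinear_op (\<lambda>x. S (Q x))"
    using bounded_op_clinear[OF assms(1)] bounded_op_clinear[OF assms(2)]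
    by (simp add: clinear_op_def)
  ultimately show ?thesis
    by (intro bounded_opI[where K = K]) (simp_all add: mult.commute)
qed

section \<open>Hermitian forms and the Cauchy--Schwarz inequality\<close>

lemma hermitian_form_conj:
  assumes P: "clinear_op P" and real: "\<And>z. Im (cinner (P z) z) = 0"
  shows "cinner (P x) y = cnj (cinner (P y) x)"
proof -
  define a where "a = cinner (P x) y"
  define b where "b = cinner (P y) x"
  have "cinner (P (x + y)) (x + y) = cinner (P x) x + a + b + cinner (P y) y"
    by (simp add: a_def b_def clinear_op_add[OF P] cinner_add_left cinner_add_right)
  then have "Im a + Im b = 0"
    using real[of "x + y"] real[of x] real[of y] by simp
  moreover have "cinner (P (x + scaleC \<i> y)) (x + scaleC \<i> y)
      = cinner (P x) x - \<i> * a + \<i> * b + cinner (P y) y"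
    by (simp add: a_def b_def clinear_op_add[OF P] clinear_op_scaleC[OF P] cinner_add_left
        cinner_add_right cinner_scaleC_left cinner_scaleC_right ring_distribs)
  then have "Re b - Re a = 0"
    using real[of "x + scaleC \<i> y"] real[of x] real[of y] by simp
  ultimately show ?thesis
    by (simp add: a_def b_def complex_eq_iff)
qed

lemma hermitian_form_on_line:
  fixes x y :: "'a::complex_inner"
  assumes P: "clinear_op P" and real: "\<And>z. Im (cinner (P z) z) = 0"
  defines "w \<equiv> cinner (P x) y"
  shows "Re (cinner (P (x - scaleC (of_real t * w) y)) (x - scaleC (of_real t * w) y))
    = Re (cinner (P x) x) - 2 * t * (cmod w)\<^sup>2 + t\<^sup>2 * (cmod w)\<^sup>2 * Re (cinner (P y) y)"
proof -
  have "cinner (P y) x = cnj w"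
    unfolding w_def by (rule hermitian_form_conj[OF P real])
  then have "cinner (P (x - scaleC (of_real t * w) y)) (x - scaleC (of_real t * w) y)
      = cinner (P x) x - 2 * of_real t * (w * cnj w) + (of_real t)\<^sup>2 * (w * cnj w) * cinner (P y) y"
    by (simp add: clinear_op_diff[OF P] clinear_op_scaleC[OF P] cinner_diff_left cinner_diff_right
        cinner_scaleC_left cinner_scaleC_right w_def[symmetric] algebra_simps power2_eq_square)
  then show ?thesis
    by (simp add: complex_norm_square[symmetric] del: of_real_power)
qed

lemma quadratic_nonneg_discriminant:
  fixes a c m :: real
  assumes nonneg: "\<And>t. 0 \<le> a - 2 * t * m + t\<^sup>2 * m * c" and "m \<ge> 0" "c \<ge> 0"
  shows "m \<le> a * c"
proof (cases "c > 0")
  case True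
  have "0 \<le> a - 2 * (1 / c) * m + (1 / c)\<^sup>2 * m * c"
    by (rule nonneg)
  with True show ?thesis
    by (simp add: field_simps power2_eq_square)
next
  case False
  show ?thesis
  proof (rule ccontr)
    assume "\<not> m \<le> a * c"
    with False \<open>c \<ge> 0\<close> have "c = 0" "m > 0"
      by auto
    moreover have "0 \<le> a - 2 * ((a + 1) / (2 * m)) * m + ((a + 1) / (2 * m))\<^sup>2 * m * c"
      by (rule nonneg)
    ultimately show False
      by (simp add: field_simps)
  qed
qed

lemma positive_form_Cauchy_Schwarz:
  assumes P: "clinear_op P" and real: "\<And>z. Im (cinner (P z) z) = 0"
    and nonneg: "\<And>z. 0 \<le> Re (cinner (P z) z)"
  shows "(cmod (cinner (P x) y))\<^sup>2 \<le> Re (cinner (P x) x) * Re (cinner (P y) y)"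
  using nonneg[of "x - scaleC (of_real _ * cinner (P x) y) y"] nonneg[of y]
  by (intro quadratic_nonneg_discriminant) (auto simp: hermitian_form_on_line[OF P real])

lemma cinner_Cauchy_Schwarz: "cmod (cinner x y) \<le> norm x * norm (y::'a::complex_inner)"
proof -
  have "clinear_op (\<lambda>z::'a. z)"
    by (simp add: clinear_op_def)
  then have "(cmod (cinner x y))\<^sup>2 \<le> (norm x * norm y)\<^sup>2"
    using positive_form_Cauchy_Schwarz[of "\<lambda>z. z" x y]
    by (simp add: cinner_self_eq_norm_sq power_mult_distrib)
  then show ?thesis
    by (rule power2_le_imp_le) simp
qed

lemma bounded_linear_cinner_left: "bounded_linear (\<lambda>x::'a::complex_inner. cinner x y)"
  by (rule bounded_linear_intro[where K = "norm y"])
    (simp_all add: cinner_add_left scaleR_scaleC cinner_scaleC_left scaleR_conv_of_real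
      cinner_Cauchy_Schwarz)

lemma bounded_linear_cinner_right: "bounded_linear (\<lambda>y::'a::complex_inner. cinner x y)"
  using cinner_Cauchy_Schwarz[of x]
  by (intro bounded_linear_intro[where K = "norm x"])
    (simp_all add: cinner_add_right scaleR_scaleC cinner_scaleC_right scaleR_conv_of_real mult.commute)

section \<open>Closed subspaces and orthogonal projections\<close>

definition csubspace :: "'a::complex_vector set \<Rightarrow> bool" where
  "csubspace M \<longleftrightarrow> 0 \<in> M \<and> (\<forall>x\<in>M. \<forall>y\<in>M. x + y \<in> M) \<and> (\<forall>c. \<forall>x\<in>M. scaleC c x \<in> M)"

lemma csubspace_zero: "csubspace M \<Longrightarrow> 0 \<in> M"
  by (simp add: csubspace_def)

lemma csubspace_add: "csubspace M \<Longrightarrow> x \<in> M \<Longrightarrow> y \<in> M \<Longrightarrow> x + y \<in> M"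
  by (simp add: csubspace_def)

lemma csubspace_scaleC: "csubspace M \<Longrightarrow> x \<in> M \<Longrightarrow> scaleC c x \<in> M"
  by (simp add: csubspace_def)

lemma csubspace_diff: "csubspace M \<Longrightarrow> x \<in> M \<Longrightarrow> y \<in> M \<Longrightarrow> x - y \<in> M"
  by (metis csubspace_add csubspace_scaleC diff_conv_add_uminus scaleR_minus1_left scaleR_scaleC)

lemma csubspace_range: "clinear_op S \<Longrightarrow> csubspace (range S)"
  unfolding csubspace_def
  by (auto simp: image_iff) (metis clinear_op_zero, metis clinear_op_add, metis clinear_op_scaleC)

lemma closure_image_subset_closure:
  fixes L :: "'a::complex_inner \<Rightarrow> 'a"
  assumes "bounded_op L" and "\<And>x. x \<in> S \<Longrightarrow> L x \<in> S'" and "x \<in> closure S"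
  shows "L x \<in> closure S'"
proof -
  have "L ` closure S \<subseteq> closure S'"
    using assms(2) by (intro image_closure_subset linear_continuous_on
        bounded_op_bounded_linear[OF assms(1)]) (auto intro: closure_subset[THEN subsetD])
  with assms(3) show ?thesis
    by blast
qed

lemma csubspace_closure:
  fixes S :: "'a::complex_inner set"
  assumes S: "csubspace S"
  shows "csubspace (closure S)"
  unfolding csubspace_def
proof (intro conjI ballI allI)
  show "0 \<in> closure S"
    using csubspace_zero[OF S] closure_subset by blast
next
  fix x y
  assume "x \<in> closure S" "y \<in> closure S"
  then obtain f g where "\<And>n. f n \<in> S" "f \<longlonglongrightarrow> x" "\<And>n. g n \<in> S" "g \<longlonglongrightarrow> y"
    unfolding closure_sequential by blast
  then show "x + y \<in> closure S"
    unfolding closure_sequential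
    by (intro exI[of _ "\<lambda>n. f n + g n"]) (simp add: tendsto_add csubspace_add[OF S])
next
  fix c x
  assume "x \<in> closure S"
  have scale: "bounded_op (scaleC c :: 'a \<Rightarrow> 'a)"
    by (intro bounded_opI[where K = "cmod c"] clinear_opI)
      (simp_all add: scaleC_add_right scaleC_scaleC mult.commute norm_scaleC)
  show "scaleC c x \<in> closure S"
    using closure_image_subset_closure[OF scale, of S S x] csubspace_scaleC[OF S] \<open>x \<in> closure S\<close>
    by blast
qed

lemma orthogonal_closure:
  fixes w :: "'a::complex_inner"
  assumes "\<And>m. m \<in> S \<Longrightarrow> cinner w m = 0" and "m \<in> closure S"
  shows "cinner w m = 0"
proof -
  have "closed {m. cinner w m = 0}"
    by (intro closed_Collect_eq continuous_intros linear_continuous_on bounded_linear_cinner_right)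
  then have "closure S \<subseteq> {m. cinner w m = 0}"
    using assms(1) by (intro closure_minimal) auto
  with assms(2) show ?thesis
    by blast
qed

lemma parallelogram_law:
  fixes a b :: "'a::complex_inner"
  shows "(norm (a - b))\<^sup>2 + (norm (a + b))\<^sup>2 = 2 * (norm a)\<^sup>2 + 2 * (norm b)\<^sup>2"
  unfolding norm_sq_eq_cinner
  by (simp add: cinner_diff_left cinner_diff_right cinner_add_left cinner_add_right)

text \<open>Two near-minimizers \<open>a, b\<close> of the distance to \<open>x\<close> on a subspace are close, since their
  midpoint lies in the subspace and so is at distance at least \<open>d\<close> from \<open>x\<close>.\<close>

lemma near_minimizers_close:
  fixes x a b :: "'a::complex_inner"
  assumes "0 \<le> d" and "d \<le> norm (x - scaleC (1/2) (a + b))"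
    and "norm (x - a) \<le> r" and "norm (x - b) \<le> s"
  shows "(norm (a - b))\<^sup>2 \<le> 2 * r\<^sup>2 + 2 * s\<^sup>2 - 4 * d\<^sup>2"
proof -
  have "scaleC 2 z = z + z" for z :: 'a
    by (metis scaleR_2 scaleR_scaleC of_real_numeral)
  then have "x - a + (x - b) = scaleC 2 (x - scaleC (1/2) (a + b))"
    by (simp add: scaleC_diff_right scaleC_scaleC scaleC_one)
  then have "2 * d \<le> norm (x - a + (x - b))"
    using assms(2) by (simp add: norm_scaleC)
  then have "(2 * d)\<^sup>2 \<le> (norm (x - a + (x - b)))\<^sup>2"
    using assms(1) by (intro power_mono) auto
  moreover have "(norm (x - a))\<^sup>2 \<le> r\<^sup>2" "(norm (x - b))\<^sup>2 \<le> s\<^sup>2"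
    using assms(3,4) by (auto intro: power_mono)
  moreover have "(norm (a - b))\<^sup>2 + (norm (x - a + (x - b)))\<^sup>2
      = 2 * (norm (x - a))\<^sup>2 + 2 * (norm (x - b))\<^sup>2"
    using parallelogram_law[of "x - a" "x - b"] by (simp add: norm_minus_commute)
  ultimately show ?thesis
    by (simp add: power_mult_distrib)
qed

lemma Cauchy_near_minimizers:
  fixes x :: "'a::complex_inner"
  assumes M: "csubspace M" and m: "\<And>n. m n \<in> M" and d_le: "\<And>y. y \<in> M \<Longrightarrow> d \<le> norm (x - y)"
    and "0 \<le> d" and near: "\<And>n. norm (x - m n) < r n" and r: "r \<longlonglongrightarrow> d"
  shows "Cauchy m"
proof (rule CauchyI)
  fix e :: real
  assume "e > 0"
  have "(\<lambda>n. (r n)\<^sup>2 - d\<^sup>2) \<longlonglongrightarrow> d\<^sup>2 - d\<^sup>2"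
    by (intro tendsto_intros r)
  then have "\<exists>N. \<forall>n\<ge>N. norm ((r n)\<^sup>2 - d\<^sup>2 - (d\<^sup>2 - d\<^sup>2)) < e\<^sup>2 / 4"
    by (rule LIMSEQ_D) (use \<open>e > 0\<close> in simp)
  then obtain N where N: "\<And>n. n \<ge> N \<Longrightarrow> \<bar>(r n)\<^sup>2 - d\<^sup>2\<bar> < e\<^sup>2 / 4"
    by auto
  have "norm (m i - m j) < e" if "i \<ge> N" "j \<ge> N" for i j
  proof -
    have "scaleC (1/2) (m i + m j) \<in> M"
      using M m by (simp add: csubspace_add csubspace_scaleC)
    then have "(norm (m i - m j))\<^sup>2 \<le> 2 * (r i)\<^sup>2 + 2 * (r j)\<^sup>2 - 4 * d\<^sup>2"
      using near[of i] near[of j] d_le \<open>0 \<le> d\<close> by (intro near_minimizers_close) auto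
    also have "\<dots> < e\<^sup>2"
      using N[OF that(1)] N[OF that(2)] abs_ge_self[of "(r i)\<^sup>2 - d\<^sup>2"]
        abs_ge_self[of "(r j)\<^sup>2 - d\<^sup>2"] by linarith
    finally show ?thesis
      using \<open>e > 0\<close> by (simp add: power_less_imp_less_base)
  qed
  then show "\<exists>N. \<forall>i\<ge>N. \<forall>j\<ge>N. norm (m i - m j) < e"
    by blast
qed

lemma closed_csubspace_nearest_point:
  fixes M :: "'a::chilbert_space set"
  assumes "closed M" and M: "csubspace M"
  shows "\<exists>p\<in>M. \<forall>m\<in>M. norm (x - p) \<le> norm (x - m)"
proof -
  define d where "d = infdist x M"
  have "M \<noteq> {}"
    using csubspace_zero[OF M] by auto
  have d_le: "d \<le> norm (x - m)" if "m \<in> M" for m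
    using infdist_le[OF that, of x] by (simp add: d_def dist_norm)
  define r :: "nat \<Rightarrow> real" where "r n = d + 1 / Suc n" for n
  have r_lim: "r \<longlonglongrightarrow> d"
    unfolding r_def using tendsto_add[OF tendsto_const LIMSEQ_Suc[OF lim_inverse_n']] by simp
  have "\<exists>m\<in>M. dist x m < r n" for n
  proof -
    have "(INF m\<in>M. dist x m) < r n"
      using \<open>M \<noteq> {}\<close> by (simp add: r_def d_def infdist_notempty)
    moreover have "bdd_below (dist x ` M)"
      by (rule bdd_belowI[where m = 0]) auto
    ultimately show ?thesis
      using cINF_less_iff[OF \<open>M \<noteq> {}\<close>] by blast
  qed
  then obtain m where m: "\<And>n. m n \<in> M" and m_near: "\<And>n. norm (x - m n) < r n"
    by (metis dist_norm)
  have "0 \<le> d"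
    by (simp add: d_def infdist_nonneg)
  have "Cauchy m"
    by (rule Cauchy_near_minimizers[OF M m d_le \<open>0 \<le> d\<close> m_near r_lim])
  then obtain p where p: "m \<longlonglongrightarrow> p"
    using Cauchy_convergent_iff convergent_def by blast
  have "norm (x - p) \<le> d"
  proof (rule tendsto_le[OF trivial_limit_sequentially r_lim])
    show "(\<lambda>n. norm (x - m n)) \<longlonglongrightarrow> norm (x - p)"
      by (intro tendsto_intros p)
    show "\<forall>\<^sub>F n in sequentially. norm (x - m n) \<le> r n"
      using m_near by (simp add: less_imp_le)
  qed
  moreover have "p \<in> M"
    using closed_sequentially[OF assms(1) m p] .
  ultimately show ?thesis
    using d_le by (meson order_trans)
qed

lemma closed_csubspace_orthogonal_decomposition:
  fixes M :: "'a::chilbert_space set"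
  assumes "closed M" and M: "csubspace M"
  shows "\<exists>p\<in>M. \<forall>m\<in>M. cinner (x - p) m = 0"
proof -
  obtain p where "p \<in> M" and p_min: "\<And>m. m \<in> M \<Longrightarrow> norm (x - p) \<le> norm (x - m)"
    using closed_csubspace_nearest_point[OF assms] by blast
  have "cinner (x - p) m = 0" if "m \<in> M" for m
  proof -
    have id: "clinear_op (\<lambda>z::'a. z)"
      by (simp add: clinear_op_def)
    have real: "Im (cinner z z) = 0" for z :: 'a
      by (simp add: cinner_self_eq_norm_sq)
    define w where "w = cinner (x - p) m"
    have "0 \<le> 0 - 2 * t * (cmod w)\<^sup>2 + t\<^sup>2 * (cmod w)\<^sup>2 * (norm m)\<^sup>2" for t
    proof -
      have "p + scaleC (of_real t * w) m \<in> M"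
        using M \<open>p \<in> M\<close> \<open>m \<in> M\<close> by (simp add: csubspace_add csubspace_scaleC)
      then have "(norm (x - p))\<^sup>2 \<le> (norm (x - p - scaleC (of_real t * w) m))\<^sup>2"
        using p_min by (simp add: diff_diff_eq power_mono)
      then show ?thesis
        using hermitian_form_on_line[OF id real, where x = "x - p" and y = m and t = t]
        by (simp add: w_def norm_sq_eq_cinner)
    qed
    then have "(cmod w)\<^sup>2 \<le> 0"
      using quadratic_nonneg_discriminant[where a = 0 and m = "(cmod w)\<^sup>2" and c = "(norm m)\<^sup>2"]
      by simp
    then show ?thesis
      by (simp add: w_def)
  qed
  with \<open>p \<in> M\<close> show ?thesis
    by blast
qed

definition proj :: "'a::chilbert_space set \<Rightarrow> 'a \<Rightarrow> 'a" where
  "proj M x = (SOME p. p \<in> M \<and> (\<forall>m\<in>M. cinner (x - p) m = 0))"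

context
  fixes M :: "'a::chilbert_space set"
  assumes closed: "closed M" and subspace: "csubspace M"
begin

lemma proj_in: "proj M x \<in> M"
  and proj_orthogonal: "m \<in> M \<Longrightarrow> cinner (x - proj M x) m = 0"
proof -
  have "\<exists>p. p \<in> M \<and> (\<forall>m\<in>M. cinner (x - p) m = 0)"
    using closed_csubspace_orthogonal_decomposition[OF closed subspace] by blast
  then have "proj M x \<in> M \<and> (\<forall>m\<in>M. cinner (x - proj M x) m = 0)"
    unfolding proj_def by (rule someI_ex)
  then show "proj M x \<in> M" "m \<in> M \<Longrightarrow> cinner (x - proj M x) m = 0"
    by auto
qed

lemma proj_unique:
  assumes "p \<in> M" and orth: "\<And>m. m \<in> M \<Longrightarrow> cinner (x - p) m = 0"
  shows "proj M x = p"
proof -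
  have "p - proj M x \<in> M"
    using csubspace_diff[OF subspace assms(1) proj_in] .
  then have "cinner (p - proj M x) (p - proj M x) = 0"
    using cinner_diff_left[of "x - proj M x" "x - p" "p - proj M x"] proj_orthogonal orth by simp
  then show ?thesis
    by (metis cinner_eq_zero_iff eq_iff_diff_eq_0)
qed

lemma proj_fixes: "x \<in> M \<Longrightarrow> proj M x = x"
  by (rule proj_unique) auto

lemma proj_clinear: "clinear_op (proj M)"
proof (rule clinear_opI)
  fix x y
  have "x + y - (proj M x + proj M y) = (x - proj M x) + (y - proj M y)"
    by simp
  then show "proj M (x + y) = proj M x + proj M y"
    by (intro proj_unique csubspace_add[OF subspace] proj_in)
      (simp only: cinner_add_left proj_orthogonal add_0)
next
  fix c x
  show "proj M (scaleC c x) = scaleC c (proj M x)"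
    by (intro proj_unique csubspace_scaleC[OF subspace] proj_in)
      (simp add: cinner_scaleC_left proj_orthogonal flip: scaleC_diff_right)
qed

lemma norm_proj_le: "norm (proj M x) \<le> norm x"
proof -
  have "cinner (x - proj M x) (proj M x) = 0"
    by (rule proj_orthogonal[OF proj_in])
  then have "cinner (proj M x) (x - proj M x) = 0"
    by (metis cinner_commute complex_cnj_zero)
  with \<open>cinner (x - proj M x) (proj M x) = 0\<close>
  have "cinner x x = cinner (proj M x) (proj M x) + cinner (x - proj M x) (x - proj M x)"
    using cinner_add_left[of "proj M x" "x - proj M x"]
      cinner_add_right[of _ "proj M x" "x - proj M x"] by simp
  then have "(norm x)\<^sup>2 = (norm (proj M x))\<^sup>2 + (norm (x - proj M x))\<^sup>2"
    by (simp add: norm_sq_eq_cinner)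
  then have "(norm (proj M x))\<^sup>2 \<le> (norm x)\<^sup>2"
    by simp
  then show ?thesis
    by (rule power2_le_imp_le) simp
qed

lemma bounded_op_proj: "bounded_op (proj M)"
  by (rule bounded_opI[where K = 1]) (simp_all add: proj_clinear norm_proj_le)

end

section \<open>The Riesz representation theorem and adjoints\<close>

lemma functional_eq_cinner_if_orthogonal_kernel:
  fixes f :: "'a::complex_inner \<Rightarrow> complex"
  assumes add: "\<And>x y. f (x + y) = f x + f y" and scale: "\<And>c x. f (scaleC c x) = c * f x"
    and "f u \<noteq> 0" and u_orth: "\<And>v. f v = 0 \<Longrightarrow> cinner u v = 0"
  shows "f x = cinner x (scaleC (cnj (f u) / cinner u u) u)"
proof -
  have "f 0 = 0"
    using scale[of 0 0] by simp
  with \<open>f u \<noteq> 0\<close> have "cinner u u \<noteq> 0"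
    by (auto simp: cinner_eq_zero_iff)
  have "f (scaleC (f x) u - scaleC (f u) x) = 0"
    using add[of "scaleC (f x) u - scaleC (f u) x" "scaleC (f u) x"] by (simp add: scale mult.commute)
  then have "cinner u (scaleC (f x) u - scaleC (f u) x) = 0"
    by (rule u_orth)
  then have "cnj (f x) * cinner u u = cnj (f u) * cinner u x"
    by (simp add: cinner_diff_right cinner_scaleC_right)
  then have "f x * cnj (cinner u u) = f u * cinner x u"
    by (metis cinner_commute complex_cnj_cnj complex_cnj_mult)
  with \<open>cinner u u \<noteq> 0\<close> show ?thesis
    by (simp add: cinner_scaleC_right field_simps)
qed

lemma Riesz_representation:
  fixes f :: "'a::chilbert_space \<Rightarrow> complex"
  assumes add: "\<And>x y. f (x + y) = f x + f y" and scale: "\<And>c x. f (scaleC c x) = c * f x"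
    and bound: "\<And>x. cmod (f x) \<le> K * norm x"
  shows "\<exists>z. \<forall>x. f x = cinner x z"
proof (cases "\<forall>x. f x = 0")
  case True
  then show ?thesis
    by (intro exI[of _ 0]) simp
next
  case False
  then obtain x0 where "f x0 \<noteq> 0"
    by blast
  have "bounded_linear f"
    using bound by (intro bounded_linear_intro[where K = K])
      (simp_all add: add scale scaleR_scaleC scaleR_conv_of_real mult.commute)
  then have "closed {x. f x = 0}"
    by (intro closed_Collect_eq linear_continuous_on continuous_on_const)
  moreover have "csubspace {x. f x = 0}"
    unfolding csubspace_def using add scale scale[of 0 0] by auto
  ultimately have N: "closed {x. f x = 0}" "csubspace {x. f x = 0}" .
  define u where "u = x0 - proj {x. f x = 0} x0"
  have "f u = f x0"
    using proj_in[OF N, of x0] add[of u "proj {x. f x = 0} x0"] by (simp add: u_def)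
  moreover have "cinner u v = 0" if "f v = 0" for v
    using proj_orthogonal[OF N, of v x0] that by (simp add: u_def)
  ultimately have "f x = cinner x (scaleC (cnj (f u) / cinner u u) u)" for x
    using \<open>f x0 \<noteq> 0\<close>
    by (intro functional_eq_cinner_if_orthogonal_kernel[OF add scale]) simp_all
  then show ?thesis
    by blast
qed

lemma adjoint_exists:
  fixes S :: "'a::chilbert_space \<Rightarrow> 'a"
  assumes "bounded_op S"
  shows "\<exists>S'. \<forall>x y. cinner (S x) y = cinner x (S' y)"
proof -
  obtain K where K: "\<And>x. norm (S x) \<le> K * norm x"
    using bounded_op_bound[OF assms] by blast
  have S: "clinear_op S"
    using assms by (rule bounded_op_clinear)
  have "\<exists>z. \<forall>x. cinner (S x) y = cinner x z" for y
  proof (rule Riesz_representation[where K = "K * norm y"])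
    fix x
    have "cmod (cinner (S x) y) \<le> norm (S x) * norm y"
      by (rule cinner_Cauchy_Schwarz)
    also have "\<dots> \<le> K * norm x * norm y"
      using K by (simp add: mult_right_mono)
    finally show "cmod (cinner (S x) y) \<le> K * norm y * norm x"
      by (simp add: ac_simps)
  qed (simp_all add: clinear_op_add[OF S] clinear_op_scaleC[OF S] cinner_add_left cinner_scaleC_left)
  then show ?thesis
    by metis
qed

lemma cinner_adjoint_op:
  fixes S :: "'a::chilbert_space \<Rightarrow> 'a"
  assumes "bounded_op S"
  shows "cinner (S x) y = cinner x (adjoint_op S y)"
proof -
  have unique: "S1 = S2" if "\<forall>x y. cinner (S x) y = cinner x (S1 y)"
    and "\<forall>x y. cinner (S x) y = cinner x (S2 y)" for S1 S2
  proof
    fix y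
    show "S1 y = S2 y"
      by (rule cinner_eq_right_imp_eq) (use that in metis)
  qed
  obtain S' where S': "\<forall>x y. cinner (S x) y = cinner x (S' y)"
    using adjoint_exists[OF assms] by blast
  have "\<forall>x y. cinner (S x) y = cinner x (adjoint_op S y)"
    unfolding adjoint_op_def by (rule theI[of _ S']) (use S' unique in blast)+
  then show ?thesis
    by blast
qed

section \<open>Positive operators and their square roots\<close>

lemma positive_op_clinear: "positive_op P \<Longrightarrow> clinear_op P"
  by (simp add: positive_op_def bounded_op_def)

lemma positive_op_bounded: "positive_op P \<Longrightarrow> bounded_op P"
  by (simp add: positive_op_def)

lemma positive_op_form_real: "positive_op P \<Longrightarrow> Im (cinner (P z) z) = 0"
  by (simp add: positive_op_def)

lemma positive_op_form_nonneg: "positive_op P \<Longrightarrow> 0 \<le> Re (cinner (P z) z)"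
  by (simp add: positive_op_def)

lemma positive_op_selfadjoint:
  assumes "positive_op P"
  shows "cinner (P x) y = cinner x (P y)"
  using hermitian_form_conj[OF positive_op_clinear[OF assms] positive_op_form_real[OF assms]]
  by (metis cinner_commute)

lemma positive_op_scaleC:
  assumes S: "positive_op S" and "0 \<le> r"
  shows "positive_op (\<lambda>x. scaleC (of_real r) (S x))"
proof -
  obtain K where K: "\<And>x. norm (S x) \<le> K * norm x"
    using bounded_op_bound[OF positive_op_bounded[OF S]] by blast
  have "norm (scaleC (of_real r) (S x)) \<le> (r * K) * norm x" for x
    using mult_left_mono[OF K[of x] \<open>0 \<le> r\<close>] \<open>0 \<le> r\<close> by (simp add: norm_scaleC mult.assoc)
  moreover have "clinear_op (\<lambda>x. scaleC (of_real r) (S x))"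
    using positive_op_clinear[OF S]
    by (intro clinear_opI) (simp_all add: clinear_op_add clinear_op_scaleC scaleC_add_right
        scaleC_scaleC mult.commute)
  ultimately have "bounded_op (\<lambda>x. scaleC (of_real r) (S x))"
    by (intro bounded_opI)
  with S \<open>0 \<le> r\<close> show ?thesis
    by (simp add: positive_op_def cinner_scaleC_left)
qed

lemma positive_op_form_eq_zero:
  assumes P: "positive_op P" and "Re (cinner (P y) y) = 0"
  shows "P y = 0"
proof -
  have "(cmod (cinner (P y) (P y)))\<^sup>2 \<le> Re (cinner (P y) y) * Re (cinner (P (P y)) (P y))"
    using P by (intro positive_form_Cauchy_Schwarz positive_op_clinear positive_op_form_real
        positive_op_form_nonneg)
  with assms(2) show ?thesis
    by (simp del: cinner_eq_zero_iff) (metis cinner_eq_zero_iff)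
qed

text \<open>The Taylor coefficients of \<open>1 - sqrt (1 - t)\<close>: the function \<open>f = 1 - sqrt (1 - t)\<close> is
  determined by \<open>(1 - f)\<^sup>2 = 1 - t\<close>, i.e. \<open>2 f = t + f\<^sup>2\<close>.\<close>

fun sqrt_coeff :: "nat \<Rightarrow> real" where
  "sqrt_coeff n = (if n = 0 then 0 else if n = 1 then 1/2
     else (\<Sum>k\<in>{1..<n}. sqrt_coeff k * sqrt_coeff (n - k)) / 2)"

declare sqrt_coeff.simps [simp del]

lemma sqrt_coeff_0 [simp]: "sqrt_coeff 0 = 0"
  and sqrt_coeff_1 [simp]: "sqrt_coeff (Suc 0) = 1/2"
  by (simp_all add: sqrt_coeff.simps)

lemma sqrt_coeff_nonneg: "sqrt_coeff n \<ge> 0"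
proof (induction n rule: less_induct)
  case (less n)
  then show ?case
    by (subst sqrt_coeff.simps) (auto intro!: sum_nonneg divide_nonneg_nonneg)
qed

definition sqrt_coeff_square :: "nat \<Rightarrow> real" where
  "sqrt_coeff_square n = (\<Sum>k\<le>n. sqrt_coeff k * sqrt_coeff (n - k))"

lemma two_sqrt_coeff: "2 * sqrt_coeff n = (if n = 1 then 1 else 0) + sqrt_coeff_square n"
proof (cases "n \<ge> 2")
  case True
  have "sqrt_coeff_square n = (\<Sum>k\<in>{1..<n}. sqrt_coeff k * sqrt_coeff (n - k))"
    unfolding sqrt_coeff_square_def
    by (rule sum.mono_neutral_right) (auto simp: not_less_eq_eq le_Suc_eq)
  with True show ?thesis
    by (simp add: sqrt_coeff.simps[of n])
next
  case False
  then have "n = 0 \<or> n = 1"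
    by auto
  then show ?thesis
    by (auto simp: sqrt_coeff_square_def)
qed

definition sqrt_coeff_psum :: "nat \<Rightarrow> real" where
  "sqrt_coeff_psum N = (\<Sum>n\<le>N. sqrt_coeff n)"

definition sqrt_coeff_triangle :: "nat \<Rightarrow> real" where
  "sqrt_coeff_triangle N = (\<Sum>(i, j)\<in>{(i, j). i + j \<le> N}. sqrt_coeff i * sqrt_coeff j)"

lemma finite_triangle: "finite {(i, j). i + j \<le> (N::nat)}"
  by (rule finite_subset[of _ "{..N} \<times> {..N}"]) auto

lemma two_sqrt_coeff_psum:
  assumes "N \<ge> 1"
  shows "2 * sqrt_coeff_psum N = 1 + sqrt_coeff_triangle N"
proof -
  have "2 * sqrt_coeff_psum N = (\<Sum>n\<le>N. (if n = 1 then 1 else 0) + sqrt_coeff_square n)"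
    unfolding sqrt_coeff_psum_def sum_distrib_left two_sqrt_coeff ..
  also have "\<dots> = 1 + (\<Sum>n\<le>N. sqrt_coeff_square n)"
    using assms by (simp add: sum.distrib sum.delta)
  also have "(\<Sum>n\<le>N. sqrt_coeff_square n) = sqrt_coeff_triangle N"
    unfolding sqrt_coeff_triangle_def sqrt_coeff_square_def by (rule sum.triangle_reindex_eq[symmetric])
  finally show ?thesis .
qed

lemma sqrt_coeff_psum_square:
  "(\<Sum>(i, j)\<in>{..N} \<times> {..N}. sqrt_coeff i * sqrt_coeff j) = (sqrt_coeff_psum N)\<^sup>2"
  unfolding sqrt_coeff_psum_def power2_eq_square sum_product sum.cartesian_product ..

lemma sqrt_coeff_triangle_le_psum_square:
  "sqrt_coeff_triangle (Suc N) \<le> (sqrt_coeff_psum N)\<^sup>2"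
proof -
  have "sqrt_coeff_triangle (Suc N)
      = (\<Sum>(i, j)\<in>{(i, j). i + j \<le> Suc N \<and> i \<ge> 1 \<and> j \<ge> 1}. sqrt_coeff i * sqrt_coeff j)"
    unfolding sqrt_coeff_triangle_def
    by (rule sum.mono_neutral_right) (auto intro: finite_triangle, (metis sqrt_coeff_0 Suc_leI gr0I)+)
  also have "\<dots> \<le> (\<Sum>(i, j)\<in>{..N} \<times> {..N}. sqrt_coeff i * sqrt_coeff j)"
    by (rule sum_mono2) (auto intro: mult_nonneg_nonneg sqrt_coeff_nonneg)
  finally show ?thesis
    by (simp add: sqrt_coeff_psum_square)
qed

lemma sqrt_coeff_psum_square_le_triangle:
  "(sqrt_coeff_psum N)\<^sup>2 \<le> sqrt_coeff_triangle (2 * N + 1)"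
  unfolding sqrt_coeff_psum_square[symmetric] sqrt_coeff_triangle_def
  by (rule sum_mono2) (auto intro: finite_triangle mult_nonneg_nonneg sqrt_coeff_nonneg)

lemma sqrt_coeff_psum_nonneg: "sqrt_coeff_psum N \<ge> 0"
  unfolding sqrt_coeff_psum_def by (intro sum_nonneg sqrt_coeff_nonneg)

lemma sqrt_coeff_psum_le_1: "sqrt_coeff_psum N \<le> 1"
proof (induction N)
  case 0
  then show ?case
    by (simp add: sqrt_coeff_psum_def)
next
  case (Suc N)
  have "2 * sqrt_coeff_psum (Suc N) = 1 + sqrt_coeff_triangle (Suc N)"
    by (rule two_sqrt_coeff_psum) simp
  also have "\<dots> \<le> 1 + (sqrt_coeff_psum N)\<^sup>2"
    using sqrt_coeff_triangle_le_psum_square by simp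
  also have "\<dots> \<le> 2"
    using Suc sqrt_coeff_psum_nonneg[of N] by (simp add: power_le_one)
  finally show ?case
    by simp
qed

lemma summable_sqrt_coeff: "summable sqrt_coeff"
proof (rule summableI_nonneg_bounded[where x = 1])
  fix n
  show "(\<Sum>i<n. sqrt_coeff i) \<le> 1"
    using sqrt_coeff_psum_le_1[of "n - 1"]
    by (cases n) (simp_all add: sqrt_coeff_psum_def lessThan_Suc_atMost)
qed (rule sqrt_coeff_nonneg)

lemma sqrt_coeff_psum_tendsto: "sqrt_coeff_psum \<longlonglongrightarrow> suminf sqrt_coeff"
  using LIMSEQ_Suc[OF summable_LIMSEQ[OF summable_sqrt_coeff]]
  by (simp add: sqrt_coeff_psum_def[abs_def] lessThan_Suc_atMost)

lemma suminf_sqrt_coeff: "suminf sqrt_coeff = 1"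
proof -
  let ?s = "suminf sqrt_coeff"
  have "1 + (sqrt_coeff_psum M)\<^sup>2 \<le> 2 * ?s" for M
  proof -
    have "1 + (sqrt_coeff_psum M)\<^sup>2 \<le> 1 + sqrt_coeff_triangle (2 * M + 1)"
      using sqrt_coeff_psum_square_le_triangle by simp
    also have "\<dots> = 2 * sqrt_coeff_psum (2 * M + 1)"
      by (rule two_sqrt_coeff_psum[symmetric]) simp
    also have "\<dots> \<le> 2 * ?s"
      using sum_le_suminf[OF summable_sqrt_coeff, of "{..2 * M + 1}"] sqrt_coeff_nonneg
      by (simp add: sqrt_coeff_psum_def)
    finally show ?thesis .
  qed
  moreover have "(\<lambda>M. 1 + (sqrt_coeff_psum M)\<^sup>2) \<longlonglongrightarrow> 1 + ?s\<^sup>2"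
    by (intro tendsto_intros sqrt_coeff_psum_tendsto)
  ultimately have "1 + ?s\<^sup>2 \<le> 2 * ?s"
    by (intro tendsto_le[OF trivial_limit_sequentially tendsto_const]) auto
  then have "(?s - 1)\<^sup>2 \<le> 0"
    by (simp add: power2_diff)
  then show ?thesis
    by simp
qed

lemma sqrt_coeff_remainder_tendsto: "(\<lambda>N. 1 - sqrt_coeff_psum N) \<longlonglongrightarrow> 0"
  using tendsto_diff[OF tendsto_const sqrt_coeff_psum_tendsto, of 1] suminf_sqrt_coeff by simp

locale selfadjoint_contraction =
  fixes C :: "'a::chilbert_space \<Rightarrow> 'a"
  assumes clinear: "clinear_op C" and norm_le: "\<And>x. norm (C x) \<le> norm x"
    and selfadjoint: "\<And>x y. cinner (C x) y = cinner x (C y)"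
begin

lemma clinear_power: "clinear_op (C ^^ n)"
  by (rule clinear_op_funpow[OF clinear])

lemma norm_power_le: "norm ((C ^^ n) x) \<le> norm x"
  by (induction n) (auto intro: order_trans[OF norm_le])

lemma power_selfadjoint: "cinner ((C ^^ n) x) y = cinner x ((C ^^ n) y)"
proof (induction n arbitrary: y)
  case 0
  then show ?case
    by simp
next
  case (Suc n)
  have "cinner ((C ^^ Suc n) x) y = cinner ((C ^^ n) x) (C y)"
    by (simp add: selfadjoint)
  also have "\<dots> = cinner x ((C ^^ Suc n) y)"
    by (simp add: Suc.IH funpow_swap1)
  finally show ?case .
qed

lemma power_form_real: "Im (cinner ((C ^^ n) x) x) = 0"
  by (metis power_selfadjoint cinner_commute cnj.sel(2) neg_equal_zero)

lemma power_form_le: "Re (cinner ((C ^^ n) x) x) \<le> (norm x)\<^sup>2"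
proof -
  have "Re (cinner ((C ^^ n) x) x) \<le> norm ((C ^^ n) x) * norm x"
    using complex_Re_le_cmod cinner_Cauchy_Schwarz order_trans by blast
  also have "\<dots> \<le> (norm x)\<^sup>2"
    by (simp add: power2_eq_square mult_right_mono norm_power_le)
  finally show ?thesis .
qed

definition sqrt_term :: "'a \<Rightarrow> nat \<Rightarrow> 'a" where
  "sqrt_term x n = scaleR (sqrt_coeff n) ((C ^^ n) x)"

definition sqrt_psum :: "nat \<Rightarrow> 'a \<Rightarrow> 'a" where
  "sqrt_psum N x = (\<Sum>n\<le>N. sqrt_term x n)"

definition sqrt_series :: "'a \<Rightarrow> 'a" where
  "sqrt_series x = suminf (sqrt_term x)"

text \<open>The square root of \<open>I - C\<close>: the series \<open>1 - (\<Sum>n. c n t\<^sup>n)\<close> evaluated at \<open>t = C\<close>.\<close>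

definition sqrt_id_minus :: "'a \<Rightarrow> 'a" where
  "sqrt_id_minus x = x - sqrt_series x"

lemma norm_sqrt_term_le: "norm (sqrt_term x n) \<le> sqrt_coeff n * norm x"
  unfolding sqrt_term_def using sqrt_coeff_nonneg[of n] norm_power_le[of n x]
  by (simp add: mult_left_mono)

lemma summable_norm_sqrt_term: "summable (\<lambda>n. norm (sqrt_term x n))"
  by (rule summable_comparison_test'[where g = "\<lambda>n. sqrt_coeff n * norm x" and N = 0])
    (auto intro: summable_mult2 summable_sqrt_coeff norm_sqrt_term_le)

lemma summable_sqrt_term: "summable (sqrt_term x)"
  using summable_norm_sqrt_term by (rule summable_norm_cancel)

lemma sqrt_term_add: "sqrt_term (x + y) n = sqrt_term x n + sqrt_term y n"
  by (simp add: sqrt_term_def clinear_op_add[OF clinear_power] scaleR_add_right)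

lemma sqrt_term_scaleC: "sqrt_term (scaleC c x) n = scaleC c (sqrt_term x n)"
  by (simp add: sqrt_term_def clinear_op_scaleC[OF clinear_power] scaleR_scaleC_commute)

lemma clinear_sqrt_psum: "clinear_op (sqrt_psum N)"
  by (rule clinear_opI)
    (simp_all add: sqrt_psum_def sqrt_term_add sqrt_term_scaleC sum.distrib scaleC_sum_right)

lemma norm_sqrt_psum_le: "norm (sqrt_psum N x) \<le> norm x"
proof -
  have "norm (sqrt_psum N x) \<le> (\<Sum>n\<le>N. sqrt_coeff n * norm x)"
    unfolding sqrt_psum_def by (rule order_trans[OF norm_sum sum_mono[OF norm_sqrt_term_le]])
  also have "\<dots> \<le> norm x"
    using mult_left_le_one_le[OF norm_ge_zero sqrt_coeff_psum_nonneg sqrt_coeff_psum_le_1, of N x]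
    by (simp add: sqrt_coeff_psum_def sum_distrib_right)
  finally show ?thesis .
qed

lemma clinear_sqrt_series: "clinear_op sqrt_series"
proof (rule clinear_opI)
  fix x y
  show "sqrt_series (x + y) = sqrt_series x + sqrt_series y"
    unfolding sqrt_series_def sqrt_term_add[abs_def]
    by (rule suminf_add[OF summable_sqrt_term summable_sqrt_term, symmetric])
next
  fix c x
  show "sqrt_series (scaleC c x) = scaleC c (sqrt_series x)"
    unfolding sqrt_series_def sqrt_term_scaleC
    by (rule bounded_linear.suminf[OF bounded_linear_scaleC summable_sqrt_term, symmetric])
qed

lemma norm_sqrt_series_minus_psum_le:
  "norm (sqrt_series x - sqrt_psum N x) \<le> (1 - sqrt_coeff_psum N) * norm x"
proof -
  have "sqrt_series x - sqrt_psum N x = (\<Sum>k. sqrt_term x (k + Suc N))"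
    using suminf_split_initial_segment[OF summable_sqrt_term, of x "Suc N"]
    by (simp add: sqrt_series_def sqrt_psum_def lessThan_Suc_atMost)
  also have "norm \<dots> \<le> (\<Sum>k. norm (sqrt_term x (k + Suc N)))"
    by (rule summable_norm[OF summable_ignore_initial_segment[OF summable_norm_sqrt_term]])
  also have "\<dots> \<le> (\<Sum>k. sqrt_coeff (k + Suc N) * norm x)"
    by (intro suminf_le norm_sqrt_term_le summable_ignore_initial_segment summable_norm_sqrt_term
        summable_mult2 summable_sqrt_coeff)
  also have "\<dots> = (\<Sum>k. sqrt_coeff (k + Suc N)) * norm x"
    by (rule suminf_mult2[symmetric]) (rule summable_ignore_initial_segment[OF summable_sqrt_coeff])
  also have "(\<Sum>k. sqrt_coeff (k + Suc N)) = 1 - sqrt_coeff_psum N"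
    using suminf_minus_initial_segment[OF summable_sqrt_coeff, of "Suc N"]
    by (simp add: suminf_sqrt_coeff sqrt_coeff_psum_def lessThan_Suc_atMost)
  finally show ?thesis .
qed

lemma norm_sqrt_series_le: "norm (sqrt_series x) \<le> norm x"
proof -
  have "norm (sqrt_series x) \<le> (\<Sum>n. sqrt_coeff n * norm x)"
    unfolding sqrt_series_def
    by (rule order_trans[OF summable_norm[OF summable_norm_sqrt_term]]
        suminf_le[OF norm_sqrt_term_le summable_norm_sqrt_term summable_mult2[OF summable_sqrt_coeff]])+
  then show ?thesis
    using suminf_mult2[OF summable_sqrt_coeff, of "norm x"] suminf_sqrt_coeff by simp
qed

end

context selfadjoint_contraction
begin

definition sqrt_term_product :: "'a \<Rightarrow> nat \<Rightarrow> nat \<Rightarrow> 'a" where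
  "sqrt_term_product x i j = scaleR (sqrt_coeff i * sqrt_coeff j) ((C ^^ (i + j)) x)"

lemma sqrt_psum_sqrt_psum:
  "sqrt_psum N (sqrt_psum N x) = (\<Sum>(i, j)\<in>{..N} \<times> {..N}. sqrt_term_product x i j)"
proof -
  have "sqrt_psum N (sqrt_psum N x) = (\<Sum>i\<le>N. \<Sum>j\<le>N. sqrt_term_product x i j)"
    by (simp add: sqrt_psum_def sqrt_term_def sqrt_term_product_def scaleR_sum_right
        clinear_op_sum[OF clinear_power] clinear_op_scaleR[OF clinear_power] funpow_add)
  then show ?thesis
    by (simp add: sum.cartesian_product)
qed

lemma two_sqrt_psum:
  assumes "N \<ge> 1"
  shows "scaleR 2 (sqrt_psum N x)
    = C x + (\<Sum>(i, j)\<in>{(i, j). i + j \<le> N}. sqrt_term_product x i j)"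
proof -
  have "scaleR 2 (sqrt_psum N x) = (\<Sum>n\<le>N. scaleR (2 * sqrt_coeff n) ((C ^^ n) x))"
    by (simp add: sqrt_psum_def sqrt_term_def scaleR_sum_right)
  also have "\<dots> = (\<Sum>n\<le>N. scaleR (if n = 1 then 1 else 0) ((C ^^ n) x))
      + (\<Sum>n\<le>N. scaleR (sqrt_coeff_square n) ((C ^^ n) x))"
    unfolding two_sqrt_coeff scaleR_add_left sum.distrib ..
  also have "(\<Sum>n\<le>N. scaleR (if n = 1 then 1 else 0) ((C ^^ n) x))
      = (\<Sum>n\<le>N. if n = 1 then (C ^^ n) x else 0)"
    by (rule sum.cong) auto
  also have "\<dots> = C x"
    using assms by (simp add: sum.delta)
  also have "(\<Sum>n\<le>N. scaleR (sqrt_coeff_square n) ((C ^^ n) x))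
      = (\<Sum>n\<le>N. \<Sum>k\<le>n. sqrt_term_product x k (n - k))"
    by (simp add: sqrt_coeff_square_def sqrt_term_product_def scaleR_sum_left)
  also have "\<dots> = (\<Sum>(i, j)\<in>{(i, j). i + j \<le> N}. sqrt_term_product x i j)"
    by (rule sum.triangle_reindex_eq[symmetric])
  finally show ?thesis .
qed

definition sqrt_id_minus_approx :: "nat \<Rightarrow> 'a \<Rightarrow> 'a" where
  "sqrt_id_minus_approx N y = y - sqrt_psum N y"

lemma norm_sqrt_id_minus_approx_le: "norm (sqrt_id_minus_approx N y) \<le> 2 * norm y"
  unfolding sqrt_id_minus_approx_def
  using norm_triangle_ineq4[of y "sqrt_psum N y"] norm_sqrt_psum_le[of N y] by simp

text \<open>Squaring the partial sum \<open>1 - (\<Sum>n\<le>N. c n t\<^sup>n)\<close> reproduces \<open>1 - t\<close> up to the products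
  \<open>c i c j t\<^sup>i\<^sup>+\<^sup>j\<close> with \<open>i, j \<le> N < i + j\<close>.\<close>

lemma norm_sqrt_id_minus_approx_square_error:
  assumes N: "N \<ge> 1"
  shows "norm (sqrt_id_minus_approx N (sqrt_id_minus_approx N x) - (x - C x))
    \<le> (1 - sqrt_coeff_psum N)\<^sup>2 * norm x"
proof -
  let ?T = "{(i, j). i + j \<le> N}" and ?D = "{..N} \<times> {..N} - {(i, j). i + j \<le> N}"
  have T_sub: "?T \<subseteq> {..N} \<times> {..N}"
    by auto
  have "sqrt_id_minus_approx N (sqrt_id_minus_approx N x) - (x - C x)
      = sqrt_psum N (sqrt_psum N x) - scaleR 2 (sqrt_psum N x) + C x"
    by (simp add: sqrt_id_minus_approx_def clinear_op_diff[OF clinear_sqrt_psum] algebra_simps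
        flip: scaleR_2)
  also have "\<dots> = (\<Sum>(i, j)\<in>?D. sqrt_term_product x i j)"
    using sum.subset_diff[OF T_sub, of "\<lambda>(i, j). sqrt_term_product x i j"]
    by (simp add: sqrt_psum_sqrt_psum two_sqrt_psum[OF N])
  also have "norm \<dots> \<le> (\<Sum>(i, j)\<in>?D. norm (sqrt_term_product x i j))"
    by (rule order_trans[OF norm_sum]) (simp add: case_prod_beta)
  also have "\<dots> \<le> (\<Sum>(i, j)\<in>?D. sqrt_coeff i * sqrt_coeff j * norm x)"
  proof (rule sum_mono)
    have "norm (sqrt_term_product x i j) \<le> sqrt_coeff i * sqrt_coeff j * norm x" for i j
      unfolding sqrt_term_product_def using norm_power_le[of "i + j" x]
      by (simp add: mult_left_mono sqrt_coeff_nonneg)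
    then show "(case p of (i, j) \<Rightarrow> norm (sqrt_term_product x i j))
        \<le> (case p of (i, j) \<Rightarrow> sqrt_coeff i * sqrt_coeff j * norm x)" for p
      by (simp split: prod.splits)
  qed
  also have "\<dots> = (\<Sum>(i, j)\<in>?D. sqrt_coeff i * sqrt_coeff j) * norm x"
    by (simp add: sum_distrib_right case_prod_beta)
  also have "(\<Sum>(i, j)\<in>?D. sqrt_coeff i * sqrt_coeff j)
      = (sqrt_coeff_psum N)\<^sup>2 - sqrt_coeff_triangle N"
    using sum.subset_diff[OF T_sub, of "\<lambda>(i, j). sqrt_coeff i * sqrt_coeff j"]
    by (simp add: sqrt_coeff_psum_square sqrt_coeff_triangle_def)
  also have "(sqrt_coeff_psum N)\<^sup>2 - sqrt_coeff_triangle N = (1 - sqrt_coeff_psum N)\<^sup>2"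
    using two_sqrt_coeff_psum[OF N] by (simp add: power2_diff)
  finally show ?thesis .
qed

lemma norm_sqrt_id_minus_square_error:
  assumes N: "N \<ge> 1"
  defines "e \<equiv> 1 - sqrt_coeff_psum N"
  shows "norm (sqrt_id_minus (sqrt_id_minus x) - (x - C x))
    \<le> e * norm (sqrt_id_minus x) + 2 * (e * norm x) + e\<^sup>2 * norm x"
proof -
  let ?B = sqrt_id_minus and ?a = "sqrt_id_minus_approx N"
  have approx_error: "norm (?B y - ?a y) \<le> e * norm y" for y
    using norm_sqrt_series_minus_psum_le[of y N]
    by (simp add: e_def sqrt_id_minus_def sqrt_id_minus_approx_def norm_minus_commute)
  have "?a (?B x) - ?a (?a x) = ?a (?B x - ?a x)"
    by (simp add: sqrt_id_minus_approx_def clinear_op_diff[OF clinear_sqrt_psum]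
        clinear_op_add[OF clinear_sqrt_psum] algebra_simps)
  then have middle: "norm (?a (?B x) - ?a (?a x)) \<le> 2 * (e * norm x)"
    using norm_sqrt_id_minus_approx_le[of N "?B x - ?a x"] approx_error[of x] by simp
  have decomp: "?B (?B x) - (x - C x)
      = (?B (?B x) - ?a (?B x)) + (?a (?B x) - ?a (?a x)) + (?a (?a x) - (x - C x))"
    by simp
  have "norm (?B (?B x) - (x - C x))
      \<le> norm (?B (?B x) - ?a (?B x)) + norm (?a (?B x) - ?a (?a x))
        + norm (?a (?a x) - (x - C x))"
    unfolding decomp by (rule order_trans[OF norm_triangle_ineq add_right_mono[OF norm_triangle_ineq]])
  with middle approx_error[of "?B x"] norm_sqrt_id_minus_approx_square_error[OF N, of x]
  show ?thesis
    by (simp add: e_def)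
qed

lemma sqrt_id_minus_square: "sqrt_id_minus (sqrt_id_minus x) = x - C x"
proof -
  define f where "f N = (1 - sqrt_coeff_psum N) * norm (sqrt_id_minus x)
    + 2 * ((1 - sqrt_coeff_psum N) * norm x) + (1 - sqrt_coeff_psum N)\<^sup>2 * norm x" for N
  have "f \<longlonglongrightarrow> 0 * norm (sqrt_id_minus x) + 2 * (0 * norm x) + 0\<^sup>2 * norm x"
    unfolding f_def by (intro tendsto_intros sqrt_coeff_remainder_tendsto)
  then have "norm (sqrt_id_minus (sqrt_id_minus x) - (x - C x)) \<le> 0"
    by (intro tendsto_le[OF trivial_limit_sequentially _ tendsto_const])
      (auto simp: f_def eventually_sequentially intro!: exI[of _ 1] norm_sqrt_id_minus_square_error)
  then show ?thesis
    by simp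
qed

lemma clinear_sqrt_id_minus: "clinear_op sqrt_id_minus"
  by (rule clinear_opI) (simp_all add: sqrt_id_minus_def clinear_op_add[OF clinear_sqrt_series]
      clinear_op_scaleC[OF clinear_sqrt_series] scaleC_diff_right)

lemma positive_op_sqrt_id_minus: "positive_op sqrt_id_minus"
proof -
  have "norm (sqrt_id_minus x) \<le> 2 * norm x" for x
    unfolding sqrt_id_minus_def
    using norm_triangle_ineq4[of x "sqrt_series x"] norm_sqrt_series_le[of x] by simp
  then have "bounded_op sqrt_id_minus"
    by (rule bounded_opI[OF clinear_sqrt_id_minus])
  moreover have "Im (cinner (sqrt_series x) x) = 0 \<and> Re (cinner (sqrt_series x) x) \<le> (norm x)\<^sup>2"
    for x
  proof -
    have "(\<lambda>n. cinner (sqrt_term x n) x) sums cinner (sqrt_series x) x"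
      unfolding sqrt_series_def
      by (rule bounded_linear.sums[OF bounded_linear_cinner_left summable_sums[OF summable_sqrt_term]])
    moreover have "cinner (sqrt_term x n) x = of_real (sqrt_coeff n) * cinner ((C ^^ n) x) x" for n
      by (simp add: sqrt_term_def scaleR_scaleC cinner_scaleC_left)
    ultimately have Re_sums:
        "(\<lambda>n. sqrt_coeff n * Re (cinner ((C ^^ n) x) x)) sums Re (cinner (sqrt_series x) x)"
      and Im_sums: "(\<lambda>n. 0) sums Im (cinner (sqrt_series x) x)"
      using sums_Re sums_Im by (force simp: power_form_real)+
    have "(\<lambda>n. sqrt_coeff n * (norm x)\<^sup>2) sums (norm x)\<^sup>2"
      using sums_mult2[OF summable_sums[OF summable_sqrt_coeff], of "(norm x)\<^sup>2"] suminf_sqrt_coeff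
      by simp
    with Re_sums have "Re (cinner (sqrt_series x) x) \<le> (norm x)\<^sup>2"
      by (rule sums_le[rotated]) (intro mult_left_mono power_form_le sqrt_coeff_nonneg)
    with Im_sums show ?thesis
      using sums_unique2 sums_zero by blast
  qed
  ultimately show ?thesis
    unfolding positive_op_def
    by (simp add: sqrt_id_minus_def cinner_diff_left cinner_self_eq_norm_sq)
qed

lemma sqrt_id_minus_commute:
  assumes Q: "bounded_op Q" and QC: "\<And>x. Q (C x) = C (Q x)"
  shows "Q (sqrt_id_minus x) = sqrt_id_minus (Q x)"
proof -
  have Q_linear: "clinear_op Q"
    using Q by (rule bounded_op_clinear)
  have "Q ((C ^^ n) z) = (C ^^ n) (Q z)" for n z
    by (induction n) (simp_all add: QC)
  then have "(\<Sum>n. Q (sqrt_term x n)) = sqrt_series (Q x)"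
    unfolding sqrt_series_def sqrt_term_def by (simp add: clinear_op_scaleR[OF Q_linear])
  moreover have "Q (sqrt_series x) = (\<Sum>n. Q (sqrt_term x n))"
    unfolding sqrt_series_def
    by (rule bounded_linear.suminf[OF bounded_op_bounded_linear[OF Q] summable_sqrt_term])
  ultimately show ?thesis
    by (simp add: sqrt_id_minus_def clinear_op_diff[OF Q_linear])
qed

end

lemma norm_le_if_form_between_0_and_norm_sq:
  assumes C: "clinear_op C" and real: "\<And>x. Im (cinner (C x) x) = 0"
    and bounds: "\<And>x. 0 \<le> Re (cinner (C x) x) \<and> Re (cinner (C x) x) \<le> (norm x)\<^sup>2"
  shows "norm (C x) \<le> norm x"
proof -
  have "((norm (C x))\<^sup>2)\<^sup>2 \<le> Re (cinner (C x) x) * Re (cinner (C (C x)) (C x))"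
    using positive_form_Cauchy_Schwarz[OF C real, of x "C x"] bounds
    by (simp add: cinner_self_eq_norm_sq del: of_real_power)
  also have "\<dots> \<le> (norm x)\<^sup>2 * (norm (C x))\<^sup>2"
    using bounds[of x] bounds[of "C x"] by (intro mult_mono) auto
  finally have square: "(norm (C x))\<^sup>2 * (norm (C x))\<^sup>2 \<le> (norm x)\<^sup>2 * (norm (C x))\<^sup>2"
    by (simp add: power2_eq_square[of "(norm (C x))\<^sup>2"])
  show ?thesis
  proof (cases "C x = 0")
    case False
    then have "(norm (C x))\<^sup>2 \<le> (norm x)\<^sup>2"
      by (intro mult_right_le_imp_le[OF square]) simp
    then show ?thesis
      by (rule power2_le_imp_le) simp
  qed simp
qed

lemma selfadjoint_contraction_id_minus_scaled:
  assumes A: "positive_op A" and "K > 0" and K: "\<And>x. norm (A x) \<le> K * norm x"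
  shows "selfadjoint_contraction (\<lambda>x. x - scaleC (of_real (1 / K)) (A x))"
    (is "selfadjoint_contraction ?C")
proof
  have A_linear: "clinear_op A"
    using A by (rule positive_op_clinear)
  show C_linear: "clinear_op ?C"
    by (rule clinear_opI) (simp_all add: clinear_op_add[OF A_linear] clinear_op_scaleC[OF A_linear]
        scaleC_add_right scaleC_diff_right scaleC_scaleC mult.commute)
  show "cinner (?C x) y = cinner x (?C y)" for x y
    by (simp add: cinner_diff_left cinner_diff_right cinner_scaleC_left cinner_scaleC_right
        positive_op_selfadjoint[OF A])
  have form: "Re (cinner (?C x) x) = (norm x)\<^sup>2 - Re (cinner (A x) x) / K"
    and real: "Im (cinner (?C x) x) = 0" for x
    using positive_op_form_real[OF A, of x]
    by (simp_all add: cinner_diff_left cinner_scaleC_left cinner_self_eq_norm_sq)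
  have "Re (cinner (A x) x) \<le> K * (norm x)\<^sup>2" for x
  proof -
    have "Re (cinner (A x) x) \<le> norm (A x) * norm x"
      using complex_Re_le_cmod cinner_Cauchy_Schwarz order_trans by blast
    also have "\<dots> \<le> K * (norm x)\<^sup>2"
      using mult_right_mono[OF K[of x] norm_ge_zero[of x]] by (simp add: power2_eq_square mult.assoc)
    finally show ?thesis .
  qed
  then have "Re (cinner (A x) x) / K \<le> (norm x)\<^sup>2" for x
    using \<open>K > 0\<close> by (simp add: pos_divide_le_eq mult.commute)
  moreover have "0 \<le> Re (cinner (A x) x) / K" for x
    using \<open>K > 0\<close> positive_op_form_nonneg[OF A, of x] by simp
  ultimately have "0 \<le> Re (cinner (?C x) x) \<and> Re (cinner (?C x) x) \<le> (norm x)\<^sup>2" for x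
    unfolding form by simp
  then show "norm (?C x) \<le> norm x" for x
    by (rule norm_le_if_form_between_0_and_norm_sq[OF C_linear real])
qed

text \<open>With \<open>C = I - A/K\<close> for a bound \<open>K\<close> of \<open>A\<close>, the root of \<open>A\<close> is \<open>sqrt K\<close> times that of \<open>I - C\<close>.\<close>

lemma positive_sqrt_exists:
  fixes A :: "'a::chilbert_space \<Rightarrow> 'a"
  assumes A: "positive_op A"
  shows "\<exists>B. positive_op B \<and> B \<circ> B = A
    \<and> (\<forall>Q. bounded_op Q \<longrightarrow> Q \<circ> A = A \<circ> Q \<longrightarrow> Q \<circ> B = B \<circ> Q)"
proof -
  obtain K where "K > 0" and K: "\<And>x. norm (A x) \<le> K * norm x"
    using bounded_op_bound_pos[OF positive_op_bounded[OF A]] by blast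
  define C where "C x = x - scaleC (of_real (1 / K)) (A x)" for x
  interpret selfadjoint_contraction C
    unfolding C_def[abs_def] by (rule selfadjoint_contraction_id_minus_scaled[OF A \<open>K > 0\<close> K])
  define B where "B x = scaleC (of_real (sqrt K)) (sqrt_id_minus x)" for x
  have "positive_op B"
    unfolding B_def[abs_def] using positive_op_sqrt_id_minus
    by (rule positive_op_scaleC) (use \<open>K > 0\<close> in simp)
  moreover have "B \<circ> B = A"
  proof
    fix x
    have "(B \<circ> B) x = scaleC (of_real (sqrt K) * of_real (sqrt K)) (sqrt_id_minus (sqrt_id_minus x))"
      by (simp add: B_def clinear_op_scaleC[OF clinear_sqrt_id_minus] scaleC_scaleC)
    then show "(B \<circ> B) x = A x"
      using \<open>K > 0\<close>
      by (simp add: sqrt_id_minus_square C_def scaleC_scaleC scaleC_one flip: of_real_mult)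
  qed
  moreover have "Q \<circ> B = B \<circ> Q" if Q: "bounded_op Q" and QA: "Q \<circ> A = A \<circ> Q" for Q
  proof
    have Q_linear: "clinear_op Q"
      using Q by (rule bounded_op_clinear)
    have "Q (C z) = C (Q z)" for z
      using fun_cong[OF QA, of z]
      by (simp add: C_def clinear_op_diff[OF Q_linear] clinear_op_scaleC[OF Q_linear])
    then show "(Q \<circ> B) x = (B \<circ> Q) x" for x
      by (simp add: B_def clinear_op_scaleC[OF Q_linear] sqrt_id_minus_commute[OF Q])
  qed
  ultimately show ?thesis
    by blast
qed

lemma positive_sqrt_unique:
  assumes B: "positive_op B" and D: "positive_op D"
    and square: "B \<circ> B = D \<circ> D" and commute: "D \<circ> B = B \<circ> D"
  shows "B = D"
proof
  fix x
  define y where "y = B x - D x"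
  have "B y + D y = (B (B x) - D (D x)) + (D (B x) - B (D x))"
    using positive_op_clinear[OF B] positive_op_clinear[OF D] by (simp add: y_def clinear_op_diff)
  also have "\<dots> = 0"
    using fun_cong[OF square, of x] fun_cong[OF commute, of x] by simp
  finally have "Re (cinner (B y) y) + Re (cinner (D y) y) = 0"
    by (metis cinner_add_left cinner_zero_left plus_complex.sel(1) zero_complex.sel(1))
  then have "Re (cinner (B y) y) = 0" and "Re (cinner (D y) y) = 0"
    using positive_op_form_nonneg[OF B, of y] positive_op_form_nonneg[OF D, of y] by linarith+
  then have "B y = 0" and "D y = 0"
    using positive_op_form_eq_zero B D by blast+
  then have "cinner y y = 0"
    unfolding y_def
    by (simp add: cinner_diff_left positive_op_selfadjoint[OF B] positive_op_selfadjoint[OF D])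
  then show "B x = D x"
    by (simp add: y_def cinner_eq_zero_iff)
qed

lemma
  fixes A :: "'a::chilbert_space \<Rightarrow> 'a"
  assumes A: "positive_op A"
  shows positive_op_sqrt: "positive_op (op_sqrt A)"
    and op_sqrt_square: "op_sqrt A \<circ> op_sqrt A = A"
proof -
  obtain B where B: "positive_op B" "B \<circ> B = A"
    and commute: "\<And>Q. bounded_op Q \<Longrightarrow> Q \<circ> A = A \<circ> Q \<Longrightarrow> Q \<circ> B = B \<circ> Q"
    using positive_sqrt_exists[OF A] by blast
  have "op_sqrt A = B"
    unfolding op_sqrt_def
  proof (rule the_equality)
    fix D
    assume D: "positive_op D \<and> D \<circ> D = A"
    then have "D \<circ> A = A \<circ> D"
      by (auto simp: comp_assoc)
    then have "D \<circ> B = B \<circ> D"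
      using commute positive_op_bounded D by blast
    then show "D = B"
      using positive_sqrt_unique[of B D] B D by metis
  qed (use B in simp)
  with B show "positive_op (op_sqrt A)" "op_sqrt A \<circ> op_sqrt A = A"
    by simp_all
qed

section \<open>Neumann series\<close>

definition neumann_inverse :: "complex \<Rightarrow> ('a::complex_inner \<Rightarrow> 'a) \<Rightarrow> 'a \<Rightarrow> 'a" where
  "neumann_inverse l S x = scaleC (inverse l) (\<Sum>n. scaleC (inverse l ^ n) ((S ^^ n) x))"

context
  fixes S :: "'a::chilbert_space \<Rightarrow> 'a" and N :: real and l :: complex
  assumes S: "bounded_op S" and S_bound: "\<And>x. norm (S x) \<le> N * norm x"
    and N: "0 \<le> N" "N < cmod l"
begin

lemma norm_neumann_term_le: "norm (scaleC (inverse l ^ n) ((S ^^ n) x)) \<le> norm x * (N / cmod l) ^ n"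
proof -
  have "norm ((S ^^ n) x) \<le> N ^ n * norm x"
  proof (induction n)
    case (Suc n)
    have "norm ((S ^^ Suc n) x) \<le> N * norm ((S ^^ n) x)"
      by (simp add: S_bound)
    also have "\<dots> \<le> N ^ Suc n * norm x"
      using mult_left_mono[OF Suc N(1)] by (simp add: mult.assoc)
    finally show ?case .
  qed simp
  then have "inverse (cmod l) ^ n * norm ((S ^^ n) x) \<le> inverse (cmod l) ^ n * (N ^ n * norm x)"
    by (rule mult_left_mono) simp
  moreover have "norm (scaleC (inverse l ^ n) ((S ^^ n) x)) = inverse (cmod l) ^ n * norm ((S ^^ n) x)"
    by (simp add: norm_scaleC norm_power norm_inverse)
  ultimately show ?thesis
    by (simp add: power_divide field_simps)
qed

lemma norm_neumann_ratio_less_1: "norm (N / cmod l) < 1"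
proof -
  have "0 < cmod l"
    using N by linarith
  with N show ?thesis
    by (simp add: pos_divide_less_eq)
qed

lemma summable_norm_neumann_term: "summable (\<lambda>n. norm (scaleC (inverse l ^ n) ((S ^^ n) x)))"
proof -
  have "summable (\<lambda>n. norm x * (N / cmod l) ^ n)"
    by (intro summable_mult summable_geometric norm_neumann_ratio_less_1)
  then show ?thesis
    by (rule summable_comparison_test') (simp add: norm_neumann_term_le)
qed

lemma summable_neumann_term: "summable (\<lambda>n. scaleC (inverse l ^ n) ((S ^^ n) x))"
  using summable_norm_neumann_term by (rule summable_norm_cancel)

lemma neumann_inverse_left: "scaleC l (neumann_inverse l S x) - S (neumann_inverse l S x) = x"
proof -
  let ?t = "\<lambda>n. scaleC (inverse l ^ n) ((S ^^ n) x)"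
  have "l \<noteq> 0"
    using N by auto
  have S_term: "S (scaleC (inverse l) (?t n)) = ?t (Suc n)" for n
    by (simp add: clinear_op_scaleC[OF bounded_op_clinear[OF S]] scaleC_scaleC mult.commute)
  have "neumann_inverse l S x = (\<Sum>n. scaleC (inverse l) (?t n))"
    unfolding neumann_inverse_def
    by (rule bounded_linear.suminf[OF bounded_linear_scaleC summable_neumann_term])
  then have "S (neumann_inverse l S x) = (\<Sum>n. S (scaleC (inverse l) (?t n)))"
    using bounded_linear.suminf[OF bounded_op_bounded_linear[OF S]
        bounded_linear.summable[OF bounded_linear_scaleC summable_neumann_term]] by simp
  also have "\<dots> = (\<Sum>n. ?t (Suc n))"
    by (simp only: S_term)
  also have "\<dots> = (\<Sum>n. ?t n) - x"
    using suminf_split_head[OF summable_neumann_term] by (simp add: scaleC_one)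
  finally show ?thesis
    using \<open>l \<noteq> 0\<close> by (simp add: neumann_inverse_def scaleC_scaleC scaleC_one)
qed

lemma neumann_inverse_right: "neumann_inverse l S (scaleC l x - S x) = x"
proof -
  let ?t = "\<lambda>n. scaleC (inverse l ^ n) ((S ^^ n) x)"
  have "l \<noteq> 0"
    using N by auto
  have S_power: "clinear_op (S ^^ n)" for n
    by (rule clinear_op_funpow[OF bounded_op_clinear[OF S]])
  have t: "summable ?t"
    by (rule summable_neumann_term)
  then have t_Suc: "summable (\<lambda>n. ?t (Suc n))"
    by (rule summable_Suc_iff[THEN iffD2])
  have "scaleC (inverse l ^ n) ((S ^^ n) (scaleC l x - S x)) = scaleC l (?t n - ?t (Suc n))" for n
    using \<open>l \<noteq> 0\<close>
    by (simp add: clinear_op_diff[OF S_power] clinear_op_scaleC[OF S_power] scaleC_diff_right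
        scaleC_scaleC funpow_swap1 field_simps)
  then have "(\<Sum>n. scaleC (inverse l ^ n) ((S ^^ n) (scaleC l x - S x)))
      = (\<Sum>n. scaleC l (?t n - ?t (Suc n)))"
    by simp
  also have "\<dots> = scaleC l (\<Sum>n. ?t n - ?t (Suc n))"
    by (rule bounded_linear.suminf[OF bounded_linear_scaleC summable_diff[OF t t_Suc], symmetric])
  also have "(\<Sum>n. ?t n - ?t (Suc n)) = x"
    using suminf_diff[OF t t_Suc] suminf_split_head[OF t] by (simp add: scaleC_one)
  finally show ?thesis
    using \<open>l \<noteq> 0\<close> by (simp add: neumann_inverse_def scaleC_scaleC scaleC_one)
qed

lemma bounded_op_neumann_inverse: "bounded_op (neumann_inverse l S)"
proof (rule bounded_opI)
  have S_power: "clinear_op (S ^^ n)" for n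
    by (rule clinear_op_funpow[OF bounded_op_clinear[OF S]])
  show "clinear_op (neumann_inverse l S)"
  proof (rule clinear_opI)
    fix x y
    show "neumann_inverse l S (x + y) = neumann_inverse l S x + neumann_inverse l S y"
      unfolding neumann_inverse_def
      by (simp add: clinear_op_add[OF S_power] scaleC_add_right suminf_add[OF summable_neumann_term
            summable_neumann_term, symmetric])
  next
    fix c x
    have "(\<Sum>n. scaleC (inverse l ^ n) ((S ^^ n) (scaleC c x)))
        = (\<Sum>n. scaleC c (scaleC (inverse l ^ n) ((S ^^ n) x)))"
      by (simp add: clinear_op_scaleC[OF S_power] scaleC_scaleC mult.commute)
    also have "\<dots> = scaleC c (\<Sum>n. scaleC (inverse l ^ n) ((S ^^ n) x))"
      by (rule bounded_linear.suminf[OF bounded_linear_scaleC summable_neumann_term, symmetric])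
    finally show "neumann_inverse l S (scaleC c x) = scaleC c (neumann_inverse l S x)"
      by (simp add: neumann_inverse_def scaleC_scaleC mult.commute)
  qed
  fix x
  have q: "norm (N / cmod l) < 1"
    by (rule norm_neumann_ratio_less_1)
  have "norm (\<Sum>n. scaleC (inverse l ^ n) ((S ^^ n) x)) \<le> (\<Sum>n. norm x * (N / cmod l) ^ n)"
    by (intro order_trans[OF summable_norm[OF summable_norm_neumann_term]] suminf_le
        norm_neumann_term_le summable_norm_neumann_term summable_mult summable_geometric q)
  also have "\<dots> = norm x / (1 - N / cmod l)"
    using q by (simp add: suminf_mult suminf_geometric summable_geometric)
  finally have "inverse (cmod l) * norm (\<Sum>n. scaleC (inverse l ^ n) ((S ^^ n) x))
      \<le> inverse (cmod l) * (norm x / (1 - N / cmod l))"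
    by (rule mult_left_mono) simp
  then show "norm (neumann_inverse l S x) \<le> (inverse (cmod l) / (1 - N / cmod l)) * norm x"
    by (simp add: neumann_inverse_def norm_scaleC norm_inverse)
qed

lemma neumann_inverse_commute:
  assumes Q: "bounded_op Q" and QS: "\<And>x. Q (S x) = S (Q x)"
  shows "Q (neumann_inverse l S x) = neumann_inverse l S (Q x)"
proof -
  have Q_linear: "clinear_op Q"
    using Q by (rule bounded_op_clinear)
  have "Q ((S ^^ n) x) = (S ^^ n) (Q x)" for n
    by (induction n) (simp_all add: QS)
  then have "(\<Sum>n. Q (scaleC (inverse l ^ n) ((S ^^ n) x)))
      = (\<Sum>n. scaleC (inverse l ^ n) ((S ^^ n) (Q x)))"
    by (simp add: clinear_op_scaleC[OF Q_linear])
  moreover have "Q (\<Sum>n. scaleC (inverse l ^ n) ((S ^^ n) x))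
      = (\<Sum>n. Q (scaleC (inverse l ^ n) ((S ^^ n) x)))"
    by (rule bounded_linear.suminf[OF bounded_op_bounded_linear[OF Q] summable_neumann_term])
  ultimately show ?thesis
    by (simp add: neumann_inverse_def clinear_op_scaleC[OF Q_linear])
qed

end

section \<open>Operators commuting with the square root of \<open>A\<close>\<close>

lemma selfadjoint_kernel_iff_orthogonal:
  fixes S :: "'a::complex_inner \<Rightarrow> 'a"
  assumes selfadjoint: "\<And>x y. cinner (S x) y = cinner x (S y)"
  shows "S w = 0 \<longleftrightarrow> (\<forall>m\<in>closure (range S). cinner w m = 0)"
proof
  assume "S w = 0"
  then have "cinner w m = 0" if "m \<in> range S" for m
    using that selfadjoint[of w] by auto
  then show "\<forall>m\<in>closure (range S). cinner w m = 0"
    by (blast intro: orthogonal_closure)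
next
  assume orth: "\<forall>m\<in>closure (range S). cinner w m = 0"
  have "S (S w) \<in> closure (range S)"
    by (intro closure_subset[THEN subsetD] rangeI)
  with orth have "cinner w (S (S w)) = 0"
    by blast
  then have "cinner (S w) (S w) = 0"
    by (simp only: selfadjoint)
  then show "S w = 0"
    by (simp add: cinner_eq_zero_iff)
qed

context
  fixes S :: "'a::chilbert_space \<Rightarrow> 'a"
  assumes S: "clinear_op S" and selfadjoint: "\<And>x y. cinner (S x) y = cinner x (S y)"
begin

lemma closed_csubspace_closure_range: "closed (closure (range S))" "csubspace (closure (range S))"
  by (simp_all add: csubspace_closure csubspace_range S)

lemma apply_proj_closure_range: "S (proj (closure (range S)) x) = S x"
proof -
  have "S (x - proj (closure (range S)) x) = 0"
    by (simp add: selfadjoint_kernel_iff_orthogonal[OF selfadjoint]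
        proj_orthogonal[OF closed_csubspace_closure_range])
  then show ?thesis
    by (simp add: clinear_op_diff[OF S])
qed

lemma proj_closure_range_commute:
  assumes Q: "bounded_op Q" and QS: "\<And>x. Q (S x) = S (Q x)"
  shows "Q (proj (closure (range S)) x) = proj (closure (range S)) (Q x)"
proof (rule proj_unique[OF closed_csubspace_closure_range, symmetric])
  let ?P = "proj (closure (range S))"
  show "Q (?P x) \<in> closure (range S)"
    by (rule closure_image_subset_closure[OF Q _ proj_in[OF closed_csubspace_closure_range]])
      (auto simp: QS)
  have "S (x - ?P x) = 0"
    by (simp add: selfadjoint_kernel_iff_orthogonal[OF selfadjoint]
        proj_orthogonal[OF closed_csubspace_closure_range])
  then have "S (Q x - Q (?P x)) = 0"
    using clinear_op_zero[OF bounded_op_clinear[OF Q]]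
    by (simp add: clinear_op_diff[OF bounded_op_clinear[OF Q], symmetric] flip: QS)
  then show "cinner (Q x - Q (?P x)) m = 0" if "m \<in> closure (range S)" for m
    using that by (simp add: selfadjoint_kernel_iff_orthogonal[OF selfadjoint])
qed

end

lemma
  fixes A :: "'a::chilbert_space \<Rightarrow> 'a"
  assumes A: "positive_op A"
  shows normA_eq_norm_op_sqrt: "normA A x = norm (op_sqrt A x)"
    and op_sqrt_eq_zero_iff: "op_sqrt A x = 0 \<longleftrightarrow> A x = 0"
proof -
  have sqrt_sqrt: "op_sqrt A (op_sqrt A x) = A x"
    using fun_cong[OF op_sqrt_square[OF A]] by simp
  have "Re (cinner (A x) x) = (norm (op_sqrt A x))\<^sup>2"
    by (simp add: sqrt_sqrt[symmetric] positive_op_selfadjoint[OF positive_op_sqrt[OF A]]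
        norm_sq_eq_cinner)
  then show "normA A x = norm (op_sqrt A x)"
    by (simp add: normA_def)
  show "op_sqrt A x = 0 \<longleftrightarrow> A x = 0"
  proof
    assume "op_sqrt A x = 0"
    then show "A x = 0"
      using sqrt_sqrt clinear_op_zero[OF positive_op_clinear[OF positive_op_sqrt[OF A]]] by metis
  next
    assume "A x = 0"
    then show "op_sqrt A x = 0"
      using \<open>Re (cinner (A x) x) = (norm (op_sqrt A x))\<^sup>2\<close> by simp
  qed
qed

text \<open>The range condition of \<open>B_sqrtA A\<close> holds because \<open>S\<^sup>* A\<^sup>1\<^sup>/\<^sup>2 = A\<^sup>1\<^sup>/\<^sup>2 S\<^sup>*\<close>.\<close>

lemma B_sqrtA_if_commute_op_sqrt:
  fixes A :: "'a::chilbert_space \<Rightarrow> 'a"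
  assumes A: "positive_op A" and S: "bounded_op S" and commute: "S \<circ> op_sqrt A = op_sqrt A \<circ> S"
  shows "S \<in> B_sqrtA A"
proof -
  let ?B = "op_sqrt A"
  have "adjoint_op S (?B y) = ?B (adjoint_op S y)" for y
  proof (rule cinner_eq_right_imp_eq)
    fix z
    have B_selfadjoint: "cinner (?B u) v = cinner u (?B v)" for u v
      by (rule positive_op_selfadjoint[OF positive_op_sqrt[OF A]])
    have "cinner z (adjoint_op S (?B y)) = cinner (?B (S z)) y"
      by (simp add: cinner_adjoint_op[OF S, symmetric] B_selfadjoint)
    also have "\<dots> = cinner (S (?B z)) y"
      using fun_cong[OF commute, of z] by simp
    also have "\<dots> = cinner z (?B (adjoint_op S y))"
      by (simp add: cinner_adjoint_op[OF S] B_selfadjoint)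
    finally show "cinner z (adjoint_op S (?B y)) = cinner z (?B (adjoint_op S y))" .
  qed
  then have "range (adjoint_op S \<circ> ?B) \<subseteq> range ?B"
    by (intro image_subsetI) simp
  with S show ?thesis
    by (simp add: B_sqrtA_def)
qed

locale op_sqrt_commuting =
  fixes A T :: "'a::chilbert_space \<Rightarrow> 'a"
  assumes A: "positive_op A" and T: "bounded_op T"
    and commute: "T \<circ> op_sqrt A = op_sqrt A \<circ> T"
begin

abbreviation "B \<equiv> op_sqrt A"
abbreviation "M \<equiv> closure (range A)"
abbreviation "P \<equiv> proj M"

lemma sqrt_sqrt_apply: "B (B x) = A x"
  using fun_cong[OF op_sqrt_square[OF A]] by simp

lemma T_sqrt_commute: "T (B x) = B (T x)"
  using fun_cong[OF commute] by simp

lemma A_linear: "clinear_op A"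
  and B_linear: "clinear_op B"
  and T_linear: "clinear_op T"
  using A T by (simp_all add: positive_op_clinear positive_op_sqrt bounded_op_clinear)

lemma A_selfadjoint: "cinner (A x) y = cinner x (A y)"
  by (rule positive_op_selfadjoint[OF A])

lemma closed_csubspace_M: "closed M" "csubspace M"
  by (rule closed_csubspace_closure_range[OF A_linear A_selfadjoint])+

lemmas proj_M_in = proj_in[OF closed_csubspace_M]
  and proj_M_clinear = proj_clinear[OF closed_csubspace_M]
  and bounded_op_proj_M = bounded_op_proj[OF closed_csubspace_M]
  and norm_proj_M_le = norm_proj_le[OF closed_csubspace_M]
  and proj_M_fixes = proj_fixes[OF closed_csubspace_M]

lemma A_proj: "A (P x) = A x"
  by (rule apply_proj_closure_range[OF A_linear A_selfadjoint])

lemma sqrt_proj: "B (P x) = B x"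
  using A_proj op_sqrt_eq_zero_iff[OF A, of "P x - x"]
  by (simp add: clinear_op_diff[OF A_linear] clinear_op_diff[OF B_linear])

lemma T_proj_commute: "T (P x) = P (T x)"
  using T by (rule proj_closure_range_commute[OF A_linear A_selfadjoint])
    (simp add: sqrt_sqrt_apply[symmetric] T_sqrt_commute)

lemma sqrt_proj_commute: "B (P x) = P (B x)"
  using positive_op_bounded[OF positive_op_sqrt[OF A]]
  by (rule proj_closure_range_commute[OF A_linear A_selfadjoint]) (simp add: sqrt_sqrt_apply[symmetric])

lemma eq_zero_if_in_M_sqrt_eq_zero:
  assumes "x \<in> M" and "B x = 0"
  shows "x = 0"
proof -
  have "A x = 0"
    using assms(2) op_sqrt_eq_zero_iff[OF A] by blast
  then have "cinner x x = 0"
    using assms(1) selfadjoint_kernel_iff_orthogonal[OF A_selfadjoint] by blast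
  then show ?thesis
    by (simp add: cinner_eq_zero_iff)
qed

lemma normA_scaleC: "normA A (scaleC c x) = cmod c * normA A x"
  by (simp add: normA_eq_norm_op_sqrt[OF A] clinear_op_scaleC[OF B_linear] norm_scaleC)

lemma bdd_above_opnormA: "bdd_above {normA A (T x) |x. x \<in> M \<and> normA A x = 1}"
proof -
  obtain K where K: "\<And>x. norm (T x) \<le> K * norm x"
    using bounded_op_bound[OF T] by blast
  show ?thesis
  proof (rule bdd_aboveI[where M = K])
    fix s
    assume "s \<in> {normA A (T x) |x. x \<in> M \<and> normA A x = 1}"
    then obtain x where "s = normA A (T x)" and "normA A x = 1"
      by blast
    then show "s \<le> K"
      using K[of "B x"] by (simp add: normA_eq_norm_op_sqrt[OF A] T_sqrt_commute)
  qed
qed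

lemma normA_apply_le_opnormA:
  assumes "x \<in> M"
  shows "normA A (T x) \<le> opnormA A T * normA A x"
proof (cases "B x = 0")
  case True
  then show ?thesis
    using eq_zero_if_in_M_sqrt_eq_zero[OF assms] clinear_op_zero[OF T_linear]
    by (simp add: normA_def)
next
  case False
  define r where "r = normA A x"
  have "r > 0"
    using False by (simp add: r_def normA_eq_norm_op_sqrt[OF A])
  have "scaleC (of_real (1 / r)) x \<in> M"
    using closed_csubspace_M(2) assms by (rule csubspace_scaleC)
  moreover have "normA A (scaleC (of_real (1 / r)) x) = 1"
    using \<open>r > 0\<close> by (simp add: normA_scaleC r_def norm_divide)
  ultimately have "normA A (T (scaleC (of_real (1 / r)) x)) \<le> opnormA A T"
    unfolding opnormA_def by (blast intro: cSup_upper[OF _ bdd_above_opnormA])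
  then have "normA A (T x) / r \<le> opnormA A T"
    using \<open>r > 0\<close> by (simp add: clinear_op_scaleC[OF T_linear] normA_scaleC norm_divide)
  with \<open>r > 0\<close> show ?thesis
    by (simp add: r_def pos_divide_le_eq)
qed

text \<open>Although \<open>\<parallel>T\<parallel>\<^sub>A\<close> only controls \<open>T\<close> on \<open>closure (R(A))\<close>, the bound holds for all \<open>z\<close>, since
  \<open>A\<^sup>1\<^sup>/\<^sup>2\<close> does not see the component of \<open>z\<close> orthogonal to \<open>R(A)\<close>.\<close>

lemma norm_sqrt_T_le: "norm (B (T z)) \<le> opnormA A T * norm (B z)"
proof -
  have "B (T z) = B (T (P z))"
    by (simp add: T_proj_commute sqrt_proj)
  then show ?thesis
    using normA_apply_le_opnormA[OF proj_M_in] by (simp add: normA_eq_norm_op_sqrt[OF A] sqrt_proj)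
qed

lemma opnormA_nonneg:
  assumes "A \<noteq> (\<lambda>_. 0)"
  shows "0 \<le> opnormA A T"
proof -
  obtain x0 where "A x0 \<noteq> 0"
    using assms by auto
  have "A x0 \<in> M"
    by (intro closure_subset[THEN subsetD] rangeI)
  then have "0 < normA A (A x0)"
    using eq_zero_if_in_M_sqrt_eq_zero \<open>A x0 \<noteq> 0\<close> by (auto simp: normA_eq_norm_op_sqrt[OF A])
  moreover have "0 \<le> normA A (T (A x0))"
    by (simp add: normA_eq_norm_op_sqrt[OF A])
  then have "0 \<le> opnormA A T * normA A (A x0)"
    using normA_apply_le_opnormA[OF \<open>A x0 \<in> M\<close>] by linarith
  ultimately show ?thesis
    by (simp add: zero_le_mult_iff)
qed

lemma proj_proj: "P (P x) = P x"
  by (rule proj_M_fixes[OF proj_M_in])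

lemma norm_T_proj_le:
  assumes "A \<noteq> (\<lambda>_. 0)"
  shows "norm (T (P x)) \<le> opnormA A T * norm x"
proof -
  have "closure (range B) \<subseteq> {y. norm (T y) \<le> opnormA A T * norm y}"
  proof (rule closure_minimal)
    show "range B \<subseteq> {y. norm (T y) \<le> opnormA A T * norm y}"
      using norm_sqrt_T_le by (auto simp: T_sqrt_commute)
    show "closed {y. norm (T y) \<le> opnormA A T * norm y}"
      by (intro closed_Collect_le continuous_intros linear_continuous_on bounded_op_bounded_linear T)
  qed
  moreover have "M \<subseteq> closure (range B)"
    by (rule closure_mono) (auto simp flip: sqrt_sqrt_apply)
  ultimately have "norm (T (P x)) \<le> opnormA A T * norm (P x)"
    using proj_M_in by blast
  also have "\<dots> \<le> opnormA A T * norm x"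
    by (rule mult_left_mono[OF norm_proj_M_le opnormA_nonneg[OF assms]])
  finally show ?thesis .
qed

lemma bounded_op_T_proj: "bounded_op (\<lambda>x. T (P x))"
  by (rule bounded_op_compose[OF T bounded_op_proj_M])

text \<open>The inverse of \<open>\<lambda> - T\<close> modulo \<open>ker A\<close>: invert \<open>\<lambda> - T P\<close> by a Neumann series, which converges
  because \<open>T P\<close> has norm at most \<open>\<parallel>T\<parallel>\<^sub>A\<close>, and project back onto \<open>closure (R(A))\<close>.\<close>

definition A_resolvent :: "complex \<Rightarrow> 'a \<Rightarrow> 'a" where
  "A_resolvent l x = P (neumann_inverse l (\<lambda>y. T (P y)) x)"

context
  fixes l :: complex
  assumes nonzero: "A \<noteq> (\<lambda>_. 0)" and l: "opnormA A T < cmod l"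
begin

lemma neumann_T_proj_left:
  "scaleC l (neumann_inverse l (\<lambda>y. T (P y)) x) - T (P (neumann_inverse l (\<lambda>y. T (P y)) x)) = x"
  by (rule neumann_inverse_left[OF bounded_op_T_proj norm_T_proj_le[OF nonzero] opnormA_nonneg[OF nonzero] l])

lemma neumann_T_proj_right: "neumann_inverse l (\<lambda>y. T (P y)) (scaleC l x - T (P x)) = x"
  by (rule neumann_inverse_right[OF bounded_op_T_proj norm_T_proj_le[OF nonzero] opnormA_nonneg[OF nonzero] l])

lemma bounded_op_neumann_T_proj: "bounded_op (neumann_inverse l (\<lambda>y. T (P y)))"
  by (rule bounded_op_neumann_inverse[OF bounded_op_T_proj norm_T_proj_le[OF nonzero]
        opnormA_nonneg[OF nonzero] l])

lemma neumann_T_proj_commute: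
  assumes "bounded_op Q" and "\<And>y. Q (T (P y)) = T (P (Q y))"
  shows "Q (neumann_inverse l (\<lambda>y. T (P y)) x) = neumann_inverse l (\<lambda>y. T (P y)) (Q x)"
  by (rule neumann_inverse_commute[OF bounded_op_T_proj norm_T_proj_le[OF nonzero]
        opnormA_nonneg[OF nonzero] l assms])

lemma A_resolvent_left: "scaleC l (A_resolvent l x) - T (A_resolvent l x) = P x"
proof -
  let ?N = "neumann_inverse l (\<lambda>y. T (P y))"
  have "scaleC l (P (?N x)) - T (P (?N x)) = P (scaleC l (?N x) - T (P (?N x)))"
    by (simp add: clinear_op_diff[OF proj_M_clinear] clinear_op_scaleC[OF proj_M_clinear]
        T_proj_commute proj_proj)
  then show ?thesis
    by (simp add: A_resolvent_def neumann_T_proj_left)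
qed

lemma A_resolvent_right: "A_resolvent l (scaleC l x - T x) = P x"
proof -
  let ?N = "neumann_inverse l (\<lambda>y. T (P y))"
  have "P (scaleC l x - T x) = scaleC l (P x) - T (P (P x))"
    by (simp add: clinear_op_diff[OF proj_M_clinear] clinear_op_scaleC[OF proj_M_clinear]
        T_proj_commute proj_proj)
  moreover have "P (?N y) = ?N (P y)" for y
    by (rule neumann_T_proj_commute[OF bounded_op_proj_M]) (simp add: T_proj_commute proj_proj)
  ultimately show ?thesis
    by (simp add: A_resolvent_def neumann_T_proj_right)
qed

lemma bounded_op_A_resolvent: "bounded_op (A_resolvent l)"
  unfolding A_resolvent_def[abs_def]
  by (rule bounded_op_compose[OF bounded_op_proj_M bounded_op_neumann_T_proj])

lemma A_resolvent_sqrt_commute: "B (A_resolvent l x) = A_resolvent l (B x)"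
proof -
  have "B (neumann_inverse l (\<lambda>y. T (P y)) x) = neumann_inverse l (\<lambda>y. T (P y)) (B x)"
    by (rule neumann_T_proj_commute[OF positive_op_bounded[OF positive_op_sqrt[OF A]]])
      (simp add: sqrt_proj_commute flip: T_sqrt_commute)
  then show ?thesis
    by (simp add: A_resolvent_def sqrt_proj_commute)
qed

end

lemma in_resolventA:
  assumes nonzero: "A \<noteq> (\<lambda>_. 0)" and l: "opnormA A T < cmod l"
  shows "l \<in> resolventA A T"
proof -
  let ?R = "A_resolvent l" and ?S = "\<lambda>x. scaleC l x - T x"
  have "?R \<noteq> (\<lambda>_. 0)"
  proof
    assume "?R = (\<lambda>_. 0)"
    then have "P x = 0" for x
      using A_resolvent_left[OF nonzero l, of x] clinear_op_zero[OF T_linear] by simp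
    moreover obtain x0 where "A x0 \<noteq> 0"
      using nonzero by auto
    moreover have "P (A x0) = A x0"
      by (intro proj_M_fixes closure_subset[THEN subsetD] rangeI)
    ultimately show False
      by simp
  qed
  moreover have "?R \<in> B_sqrtA A"
    using bounded_op_A_resolvent[OF nonzero l] A_resolvent_sqrt_commute[OF nonzero l]
    by (intro B_sqrtA_if_commute_op_sqrt[OF A]) auto
  moreover have "?S \<in> B_sqrtA A"
    using bounded_op_scaleC_minus[OF T]
    by (intro B_sqrtA_if_commute_op_sqrt[OF A])
      (auto simp: T_sqrt_commute clinear_op_diff[OF B_linear] clinear_op_scaleC[OF B_linear])
  moreover have "A \<circ> ?S \<circ> ?R = A" and "A \<circ> ?R \<circ> ?S = A"
    by (simp_all add: fun_eq_iff A_resolvent_left[OF nonzero l] A_resolvent_right[OF nonzero l] A_proj)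
  ultimately show ?thesis
    unfolding resolventA_def A_invertible_def by blast
qed

end

theorem mainTheorem7:
  fixes A T :: "'a::chilbert_space \<Rightarrow> 'a" and l :: complex
  assumes "positive_op A" and "A \<noteq> (\<lambda>_. 0)"
    and "T \<in> B_sqrtA A"
    and "T \<circ> op_sqrt A = op_sqrt A \<circ> T"
    and "cmod l > opnormA A T"
  shows "l \<in> resolventA A T"
proof -
  have "bounded_op T"
    using assms(3) by (simp add: B_sqrtA_def)
  with assms(1,4) interpret op_sqrt_commuting A T
    by unfold_locales
  show ?thesis
    using assms(2,5) by (rule in_resolventA)
qed

end
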